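(* Consider the expectation problem (EX). Suppose Assumption B holds, $x^*$ is a minimizer of $\phi$ with $\phi^*=\phi(x^* )$, $g_k$ satisfies Condition C in (EX), and $\mathbb E_k[g_k]=\nabla f(y_k)$ for all $k$. (1) Option I: if $\tilde\eta_k=\tilde\eta\in[0,1)$, $\tilde\iota_0^2\in[0,1-\tilde\eta)$, $\sum_{k}\tilde\delta_k^2<\infty$, and $\alpha_k=\alpha\le\frac{1-\tilde\eta-\tilde\iota_0^2}{L}$, then there is $C<\infty$ with $\min_{k=0,\dots,K-1}\mathbb E[\phi(x_k)-\phi^*]\le C/K$ for all $K\ge1$. (2) Option II with the convex acceleration sequences: if $\tilde\eta_k=\tilde\eta\in[0,1)$, $\tilde\iota_0^2\in[0,1-\tilde\eta)$, $\sum_k\tilde\delta_k^2/\theta_{k+1}^2<\infty$, and $\alpha_k=\alpha\le\frac{1-\tilde\eta-\tilde\iota_0^2}{L}$, then there is $C<\infty$ with $\mathbb E[\phi(x_K)-\phi^*]\le C/K^2$ for all $K\ge1$.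
   Context: Problem: minimize $\phi(x)=f(x)+h(x)$ over $x\in\mathbb{R}^d$. Assumption B: $f:\mathbb{R}^d\to\mathbb{R}$ is convex and continuously differentiable with $L$-Lipschitz continuous gradient ($L>0$), and $h:\mathbb{R}^d\to\mathbb{R}\cup\{+\infty\}$ is closed, convex and proper. Expectation problem (EX): $f(x)=\mathbb E_{\xi\sim\mathcal P}[F(x,\xi)]$. For $\alpha>0$, $\mathrm{prox}_{\alpha,h}(y)=\arg\min_{x\in\mathbb{R}^d}\{h(x)+\frac{1}{2\alpha}\|x-y\|^2\}$. Algorithm: given $x_0\in\mathbb{R}^d$, $y_0=x_0$, step sizes $\alpha_k>0$ and parameters $\beta_k$, for $k=0,1,2,\dots$: compute an estimate $g_k$ of $\nabla f(y_k)$; set $x_{k+1}=\mathrm{prox}_{\alpha_k,h}(y_k-\alpha_kg_k)$; under Option I set $y_{k+1}=x_{k+1}$, under Option II set $y_{k+1}=x_{k+1}+\beta_{k+1}(x_{k+1}-x_k)$. Define $R_{\alpha_k}(y_k)=\frac{1}{\alpha_k}(y_k-x_{k+1})$. Let $\mathcal G_k$ be the $\sigma$-algebra generated by $x_0,g_0,\dots,g_{k-1}$, $\mathbb E_k[\cdot]=\mathbb E[\cdot\mid\mathcal G_k]$, and $\mathbb E[\cdot]$ is total expectation. Condition C in (EX): for all $k\ge0$, $\mathbb E_k[\|g_k-\nabla f(y_k)\|^2]\le\frac{\tilde\eta_k^2}{4}\|\mathbb E_k[R_{\alpha_k}(y_k)]\|^2+\tilde\iota_0^2\tilde\delta_k^2$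 with $\tilde\eta_k\in[0,1)$, $\tilde\iota_0\ge0$, $\tilde\delta_k\ge0$. Convex acceleration sequences: $\beta_k=\frac{k-1}{k+2}$ for $k\ge1$, $\theta_k=\frac{2}{k+1}$ for $k\ge0$, $v_0=x_0$ and $v_k=x_{k-1}+\frac{1}{\theta_k}(x_k-x_{k-1})$ for $k\ge1$. *)

theory Defs
  imports "HOL-Analysis.Analysis" "HOL-Probability.Probability"
begin

text \<open>h is an extended-real-valued closed convex proper function, encoded by its
  effective domain D (nonempty) and its finite values on D; h = +infinity outside D.\<close>

definition closed_convex_proper :: "('a::euclidean_space \<Rightarrow> real) \<Rightarrow> 'a set \<Rightarrow> bool" where
  "closed_convex_proper h D \<longleftrightarrow> D \<noteq> {} \<and> convex D \<and> convex_on D h \<and>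
     closed {(x, t). x \<in> D \<and> h x \<le> t}"

definition prox :: "real \<Rightarrow> ('a::euclidean_space \<Rightarrow> real) \<Rightarrow> 'a set \<Rightarrow> 'a \<Rightarrow> 'a" where
  "prox a h D y = (SOME z. z \<in> D \<and>
     (\<forall>x\<in>D. h z + (norm (z - y))\<^sup>2 / (2 * a) \<le> h x + (norm (x - y))\<^sup>2 / (2 * a)))"

text \<open>Iterates (x_k, y_k) of the algorithm along one sample path G k = g_k(omega).
  Option I: beta = (\<lambda>_. 0) (then y_{k+1} = x_{k+1}); Option II: general beta.\<close>
primrec apg_xy :: "('a::euclidean_space \<Rightarrow> real) \<Rightarrow> 'a set \<Rightarrow> (nat \<Rightarrow> real) \<Rightarrow> (nat \<Rightarrow> real)
    \<Rightarrow> 'a \<Rightarrow> (nat \<Rightarrow> 'a) \<Rightarrow> nat \<Rightarrow> 'a \<times> 'a" where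
  "apg_xy h D a b x0 G 0 = (x0, x0)"
| "apg_xy h D a b x0 G (Suc k) =
     (let xk = fst (apg_xy h D a b x0 G k); yk = snd (apg_xy h D a b x0 G k);
          xn = prox (a k) h D (yk - a k *\<^sub>R G k)
      in (xn, xn + b (Suc k) *\<^sub>R (xn - xk)))"

definition xit :: "('a::euclidean_space \<Rightarrow> real) \<Rightarrow> 'a set \<Rightarrow> (nat \<Rightarrow> real) \<Rightarrow> (nat \<Rightarrow> real)
    \<Rightarrow> 'a \<Rightarrow> (nat \<Rightarrow> 'w \<Rightarrow> 'a) \<Rightarrow> nat \<Rightarrow> 'w \<Rightarrow> 'a" where
  "xit h D a b x0 g k \<omega> = fst (apg_xy h D a b x0 (\<lambda>i. g i \<omega>) k)"

definition yit :: "('a::euclidean_space \<Rightarrow> real) \<Rightarrow> 'a set \<Rightarrow> (nat \<Rightarrow> real) \<Rightarrow> (nat \<Rightarrow> real)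
    \<Rightarrow> 'a \<Rightarrow> (nat \<Rightarrow> 'w \<Rightarrow> 'a) \<Rightarrow> nat \<Rightarrow> 'w \<Rightarrow> 'a" where
  "yit h D a b x0 g k \<omega> = snd (apg_xy h D a b x0 (\<lambda>i. g i \<omega>) k)"

definition Rit :: "('a::euclidean_space \<Rightarrow> real) \<Rightarrow> 'a set \<Rightarrow> (nat \<Rightarrow> real) \<Rightarrow> (nat \<Rightarrow> real)
    \<Rightarrow> 'a \<Rightarrow> (nat \<Rightarrow> 'w \<Rightarrow> 'a) \<Rightarrow> nat \<Rightarrow> 'w \<Rightarrow> 'a" where
  "Rit h D a b x0 g k \<omega> = (1 / a k) *\<^sub>R (yit h D a b x0 g k \<omega> - xit h D a b x0 g (Suc k) \<omega>)"

text \<open>G_k: sigma-algebra generated by x_0 (deterministic) and g_0, ..., g_{k-1}.\<close>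
definition Filt :: "'w measure \<Rightarrow> (nat \<Rightarrow> 'w \<Rightarrow> 'a::euclidean_space) \<Rightarrow> nat \<Rightarrow> 'w measure" where
  "Filt M g k = sigma (space M) (\<Union>i<k. {g i -` A \<inter> space M | A. A \<in> sets borel})"

definition unbiased :: "'w measure \<Rightarrow> ('a::euclidean_space \<Rightarrow> 'a) \<Rightarrow> ('a \<Rightarrow> real) \<Rightarrow> 'a set
    \<Rightarrow> (nat \<Rightarrow> real) \<Rightarrow> (nat \<Rightarrow> real) \<Rightarrow> 'a \<Rightarrow> (nat \<Rightarrow> 'w \<Rightarrow> 'a) \<Rightarrow> bool" where
  "unbiased M gradf h D a b x0 g \<longleftrightarrow> (\<forall>k. \<forall>e\<in>Basis. AE \<omega> in M.
     real_cond_exp M (Filt M g k) (\<lambda>\<omega>. g k \<omega> \<bullet> e) \<omega> = gradf (yit h D a b x0 g k \<omega>) \<bullet> e)"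

text \<open>Condition C: E_k ||g_k - grad f(y_k)||^2 \<le> eta_k^2/4 ||E_k R(y_k)||^2 + iota0^2 delta_k^2.
  ||E_k R||^2 is written as the sum of squares of its coordinates.\<close>
definition condC :: "'w measure \<Rightarrow> ('a::euclidean_space \<Rightarrow> 'a) \<Rightarrow> ('a \<Rightarrow> real) \<Rightarrow> 'a set
    \<Rightarrow> (nat \<Rightarrow> real) \<Rightarrow> (nat \<Rightarrow> real) \<Rightarrow> 'a \<Rightarrow> (nat \<Rightarrow> 'w \<Rightarrow> 'a)
    \<Rightarrow> (nat \<Rightarrow> real) \<Rightarrow> real \<Rightarrow> (nat \<Rightarrow> real) \<Rightarrow> bool" where
  "condC M gradf h D a b x0 g eta iota0 delta \<longleftrightarrow> (\<forall>k. AE \<omega> in M.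
     nn_cond_exp M (Filt M g k)
        (\<lambda>\<omega>. ennreal ((norm (g k \<omega> - gradf (yit h D a b x0 g k \<omega>)))\<^sup>2)) \<omega>
     \<le> ennreal ((eta k)\<^sup>2 / 4 *
          (\<Sum>e\<in>Basis. (real_cond_exp M (Filt M g k) (\<lambda>\<omega>. Rit h D a b x0 g k \<omega> \<bullet> e) \<omega>)\<^sup>2)
        + iota0\<^sup>2 * (delta k)\<^sup>2))"

definition beta_acc :: "nat \<Rightarrow> real" where
  "beta_acc k = (real k - 1) / (real k + 2)"

definition theta_acc :: "nat \<Rightarrow> real" where
  "theta_acc k = 2 / (real k + 1)"

end

theory Submission
  imports Defs
begin

text \<open>
  In expectation, one step of the proximal gradient method compared with a point u in dom h
  loses nothing from the cross term between the gradient error g_k - \<nabla>f(y_k) and the step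
  taken with the exact gradient, because that step is determined by the past and g_k is
  unbiased. Condition C bounds the remaining expected squared error by eta^2/4 times the
  expected squared gradient mapping, which the descent term (1 - L alpha)/(2 alpha) absorbs since
  eta^2 \<le> 2 (1 - L alpha). (Condition C only controls the conditional mean of R; square
  integrability of all iterates follows by induction, because R is within the gradient error of
  the past-measurable gradient mapping of the exact step, so the bound closes on itself.)

  Option I: comparing with u = x* and telescoping bounds the sum of the expected gaps of
  x_1, ..., x_K by |x_0 - x*|^2/(2 alpha) + alpha iota0^2 sum_k delta_k^2, so the best of the
  first K iterates has gap O(1/K).

  Option II: comparing with u_k = (1 - theta_(k+1)) x_k + theta_(k+1) x*, the momentum
  beta_k makes y_k - u_k and x_(k+1) - u_k equal to theta_(k+1) (v_k - x*) and
  theta_(k+1) (v_(k+1) - x*). The Lyapunov function k (k + 2)/4 E[phi(x_k) - phi*] +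
  E|v_k - x*|^2/(2 alpha) then increases at step k by at most alpha iota0^2 delta_k^2/theta_(k+1)^2,
  which is summable, giving the O(1/K^2) rate.
\<close>

section \<open>Smooth convex functions\<close>

lemma descent_lemma:
  fixes f :: "'a::euclidean_space \<Rightarrow> real"
  assumes f_grad: "\<And>x. (f has_derivative (\<lambda>v. gradf x \<bullet> v)) (at x)"
    and grad_lip: "\<And>x y. norm (gradf x - gradf y) \<le> L * norm (x - y)"
  shows "f y \<le> f x + gradf x \<bullet> (y - x) + L / 2 * (norm (y - x))\<^sup>2"
proof -
  define d where "d = y - x"
  define \<psi> where "\<psi> t = f (x + t *\<^sub>R d) - t * (gradf x \<bullet> d) - L / 2 * t\<^sup>2 * (norm d)\<^sup>2" for t
  have "\<psi> 1 \<le> \<psi> 0"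
  proof (rule DERIV_nonpos_imp_nonincreasing[of 0 1 \<psi>])
    fix t :: real assume t: "0 \<le> t" "t \<le> 1"
    have "((\<lambda>t. f (x + t *\<^sub>R d)) has_derivative (\<lambda>s. gradf (x + t *\<^sub>R d) \<bullet> (s *\<^sub>R d))) (at t)"
      by (rule has_derivative_compose[OF _ f_grad]) (auto intro!: derivative_eq_intros)
    then have "((\<lambda>t. f (x + t *\<^sub>R d)) has_real_derivative (gradf (x + t *\<^sub>R d) \<bullet> d)) (at t)"
      by (simp add: has_field_derivative_def mult_commute_abs)
    then have "(\<psi> has_real_derivative (gradf (x + t *\<^sub>R d) - gradf x) \<bullet> d - L * t * (norm d)\<^sup>2) (at t)"
      unfolding \<psi>_def by (auto intro!: derivative_eq_intros simp: inner_diff_left)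
    moreover have "(gradf (x + t *\<^sub>R d) - gradf x) \<bullet> d \<le> L * t * (norm d)\<^sup>2"
    proof -
      have "(gradf (x + t *\<^sub>R d) - gradf x) \<bullet> d \<le> norm (gradf (x + t *\<^sub>R d) - gradf x) * norm d"
        by (rule norm_cauchy_schwarz)
      also have "\<dots> \<le> L * norm (t *\<^sub>R d) * norm d"
        using grad_lip[of "x + t *\<^sub>R d" x] by (simp add: mult_right_mono)
      finally show ?thesis using t by (simp add: power2_eq_square mult.assoc)
    qed
    ultimately show "\<exists>z. DERIV \<psi> t :> z \<and> z \<le> 0" by auto
  qed simp
  then show ?thesis unfolding \<psi>_def d_def by (simp add: algebra_simps)
qed

lemma convex_on_gradient_inequality:
  fixes f :: "'a::euclidean_space \<Rightarrow> real"
  assumes f_convex: "convex_on UNIV f"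
    and f_grad: "\<And>x. (f has_derivative (\<lambda>v. gradf x \<bullet> v)) (at x)"
  shows "f y + gradf y \<bullet> (u - y) \<le> f u"
proof -
  define d where "d = u - y"
  define \<phi> where "\<phi> t = f (y + t *\<^sub>R d)" for t
  have "convex_on UNIV \<phi>"
  proof (rule convex_onI)
    fix t a b :: real assume "0 < t" "t < 1"
    moreover have "y + ((1 - t) *\<^sub>R a + t *\<^sub>R b) *\<^sub>R d = (1 - t) *\<^sub>R (y + a *\<^sub>R d) + t *\<^sub>R (y + b *\<^sub>R d)"
      by (simp add: algebra_simps)
    ultimately show "\<phi> ((1 - t) *\<^sub>R a + t *\<^sub>R b) \<le> (1 - t) * \<phi> a + t * \<phi> b"
      unfolding \<phi>_def using convex_onD[OF f_convex, of t] by simp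
  qed simp
  moreover have "(\<phi> has_derivative (\<lambda>s. gradf (y + 0 *\<^sub>R d) \<bullet> (s *\<^sub>R d))) (at 0)"
    unfolding \<phi>_def by (rule has_derivative_compose[OF _ f_grad]) (auto intro!: derivative_eq_intros)
  then have "(\<phi> has_real_derivative (gradf y \<bullet> d)) (at 0)"
    by (simp add: has_field_derivative_def mult_commute_abs)
  ultimately have "(gradf y \<bullet> d) * (1 - 0) \<le> \<phi> 1 - \<phi> 0"
    by (intro convex_on_imp_above_tangent) auto
  then show ?thesis unfolding \<phi>_def d_def by simp
qed

lemma convex_on_minorant_from_local_bound:
  fixes h :: "'a::real_normed_vector \<Rightarrow> real"
  assumes "convex D" "convex_on D h" "x \<in> D" "z \<in> D"
    and local_bound: "\<And>w. w \<in> D \<Longrightarrow> norm (w - x) \<le> 1 \<Longrightarrow> h x - c \<le> h w" and "0 \<le> c"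
  shows "h x - c - c * norm (z - x) \<le> h z"
proof (cases "norm (z - x) \<le> 1")
  case True
  then show ?thesis using local_bound[OF \<open>z \<in> D\<close>] \<open>0 \<le> c\<close> by (smt (verit) mult_nonneg_nonneg norm_ge_zero)
next
  case False
  then have "1 < norm (z - x)" by simp
  define t where "t = 1 / norm (z - x)"
  have t: "0 < t" "t < 1" using \<open>1 < norm (z - x)\<close> unfolding t_def by (auto simp: divide_less_eq)
  define w where "w = (1 - t) *\<^sub>R x + t *\<^sub>R z"
  have "w \<in> D" unfolding w_def using assms t by (simp add: convex_alt)
  moreover have "norm (w - x) = 1"
    using False unfolding w_def t_def by (auto simp: algebra_simps simp flip: scaleR_diff_right)
  ultimately have "h x - c \<le> h w" by (simp add: local_bound)
  also have "h w \<le> (1 - t) * h x + t * h z"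
    unfolding w_def using convex_onD[OF assms(2), of t x z] t assms(3,4) by simp
  finally have "h x - c / t \<le> h z" using t by (simp add: field_simps)
  then show ?thesis using \<open>0 \<le> c\<close> unfolding t_def by simp
qed

lemma composite_minimizer_imp_minorant:
  fixes f :: "'a::euclidean_space \<Rightarrow> real"
  assumes f_grad: "\<And>x. (f has_derivative (\<lambda>v. gradf x \<bullet> v)) (at x)"
    and grad_lip: "\<And>x y. norm (gradf x - gradf y) \<le> L * norm (x - y)" and "0 \<le> L"
    and "convex D" "convex_on D h" "xstar \<in> D"
    and xstar_min: "\<And>x. x \<in> D \<Longrightarrow> f xstar + h xstar \<le> f x + h x"
  shows "\<exists>c0 c1. 0 \<le> c1 \<and> (\<forall>z\<in>D. c0 - c1 * norm z \<le> h z)"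
proof -
  define c where "c = norm (gradf xstar) + L / 2"
  have "0 \<le> c" unfolding c_def using \<open>0 \<le> L\<close> by simp
  have local_bound: "h xstar - c \<le> h w" if "w \<in> D" "norm (w - xstar) \<le> 1" for w
  proof -
    have "gradf xstar \<bullet> (w - xstar) \<le> norm (gradf xstar)"
      using norm_cauchy_schwarz[of "gradf xstar" "w - xstar"] that(2)
      by (smt (verit) mult_left_le norm_ge_zero)
    moreover have "L / 2 * (norm (w - xstar))\<^sup>2 \<le> L / 2"
      using that(2) \<open>0 \<le> L\<close> by (simp add: mult_left_le power_le_one)
    ultimately show ?thesis
      using descent_lemma[OF f_grad grad_lip, of w xstar] xstar_min[OF that(1)] unfolding c_def by linarith
  qed
  have "h xstar - c - c * norm xstar - c * norm z \<le> h z" if "z \<in> D" for z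
    using convex_on_minorant_from_local_bound[OF assms(4-6) that local_bound \<open>0 \<le> c\<close>]
      norm_triangle_ineq4[of z xstar] mult_left_mono[OF _ \<open>0 \<le> c\<close>]
    by (smt (verit) distrib_left)
  then show ?thesis using \<open>0 \<le> c\<close> by (metis diff_diff_eq)
qed

section \<open>The proximal operator\<close>

text \<open>Every closed convex proper function has such a minorant; it is assumed here, and for the
  problem at hand it is derived from the minimizer of f + h by the lemma above.\<close>
locale prox_operator =
  fixes h :: "'a::euclidean_space \<Rightarrow> real" and D :: "'a set"
  assumes ccp: "closed_convex_proper h D"
    and minorant: "\<exists>c0 c1. 0 \<le> c1 \<and> (\<forall>z\<in>D. c0 - c1 * norm z \<le> h z)"
begin

lemma D_nonempty: "D \<noteq> {}" and D_convex: "convex D" and h_convex: "convex_on D h"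
  and epigraph_closed: "closed {(x, t). x \<in> D \<and> h x \<le> t}"
  using ccp unfolding closed_convex_proper_def by auto

text \<open>The part of the epigraph of the prox objective below its value at a point of D is compact
  (closed by closedness of the epigraph of h, bounded by the linear minorant), so the height
  coordinate attains its minimum there.\<close>
lemma prox_objective_attains_min:
  assumes "a > 0"
  shows "\<exists>p\<in>D. \<forall>x\<in>D. h p + (norm (p - y))\<^sup>2 / (2 * a) \<le> h x + (norm (x - y))\<^sup>2 / (2 * a)"
proof -
  obtain c0 c1 where "0 \<le> c1" and h_ge: "\<And>z. z \<in> D \<Longrightarrow> c0 - c1 * norm z \<le> h z"
    using minorant by blast
  define q where "q x = (norm (x - y))\<^sup>2 / (2 * a)" for x
  obtain d where "d \<in> D" using D_nonempty by blast
  define T where "T = h d + q d"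
  define S where "S = {(x, t). x \<in> D \<and> h x + q x \<le> t \<and> t \<le> T}"
  define B where "B = sqrt (4 * a * (T - c0 + c1 * norm y + a * c1\<^sup>2))"
  have near: "norm (x - y) \<le> B" if "x \<in> D" "h x + q x \<le> T" for x
  proof -
    define s where "s = norm (x - y)"
    have "norm x \<le> norm y + s" unfolding s_def by (metis add.commute norm_triangle_sub)
    then have "c0 - c1 * norm y - c1 * s \<le> h x"
      using h_ge[OF that(1)] mult_left_mono[OF _ \<open>0 \<le> c1\<close>] by (smt (verit) distrib_left)
    moreover have "c1 * s \<le> s\<^sup>2 / (4 * a) + a * c1\<^sup>2"
    proof -
      have "0 \<le> (s - 2 * a * c1)\<^sup>2 / (4 * a)" using \<open>a > 0\<close> by simp
      also have "\<dots> = s\<^sup>2 / (4 * a) + a * c1\<^sup>2 - c1 * s"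
        using \<open>a > 0\<close> by (simp add: power2_eq_square field_simps)
      finally show ?thesis by simp
    qed
    moreover have "s\<^sup>2 / (2 * a) \<le> T - h x" using that(2) unfolding q_def s_def by simp
    moreover have "s\<^sup>2 / (2 * a) = s\<^sup>2 / (4 * a) + s\<^sup>2 / (4 * a)" by (simp add: field_simps)
    ultimately have "s\<^sup>2 / (4 * a) \<le> T - c0 + c1 * norm y + a * c1\<^sup>2" by linarith
    then show ?thesis unfolding B_def s_def using \<open>a > 0\<close> by (simp add: real_le_rsqrt field_simps)
  qed
  have "S \<subseteq> cball y B \<times> {c0 - c1 * (norm y + B)..T}"
  proof
    fix xt assume "xt \<in> S"
    then obtain x t where x: "xt = (x, t)" "x \<in> D" "h x + q x \<le> t" "t \<le> T"
      unfolding S_def by auto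
    then have "norm (x - y) \<le> B" using near by simp
    then have "c1 * norm x \<le> c1 * (norm y + B)"
      using \<open>0 \<le> c1\<close> norm_triangle_sub[of x y] by (intro mult_left_mono) auto
    moreover have "0 \<le> q x" unfolding q_def using \<open>a > 0\<close> by simp
    ultimately have "c0 - c1 * (norm y + B) \<le> t" using x(3) h_ge[OF x(2)] by linarith
    moreover have "x \<in> cball y B" using \<open>norm (x - y) \<le> B\<close> by (simp add: dist_norm norm_minus_commute)
    ultimately show "xt \<in> cball y B \<times> {c0 - c1 * (norm y + B)..T}" using x(1,4) by simp
  qed
  then have "bounded S" by (rule bounded_subset[OF bounded_Times[OF bounded_cball bounded_closed_interval]])
  moreover have "closed S"
  proof -
    have "closed ((\<lambda>z. (fst z, snd z - q (fst z))) -` {(x, t). x \<in> D \<and> h x \<le> t})"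
      by (rule continuous_closed_vimage[OF epigraph_closed])
        (use \<open>a > 0\<close> in \<open>auto intro!: continuous_intros simp: q_def\<close>)
    moreover have "S = (\<lambda>z. (fst z, snd z - q (fst z))) -` {(x, t). x \<in> D \<and> h x \<le> t} \<inter> UNIV \<times> {..T}"
      unfolding S_def by auto
    ultimately show ?thesis by (simp add: closed_Int closed_Times)
  qed
  ultimately have "compact S" by (simp add: compact_eq_bounded_closed)
  moreover have "(d, T) \<in> S" unfolding S_def T_def using \<open>d \<in> D\<close> by simp
  moreover have "continuous_on S snd" using continuous_on_snd[OF continuous_on_id] by simp
  ultimately obtain pt where "pt \<in> S" and pt_min: "\<And>u. u \<in> S \<Longrightarrow> snd pt \<le> snd u"
    using continuous_attains_inf[of S snd] by blast
  obtain p t where "pt = (p, t)" by (cases pt)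
  with \<open>pt \<in> S\<close> have p: "p \<in> D" "h p + q p \<le> t" "t \<le> T" unfolding S_def by auto
  have "h p + q p \<le> h x + q x" if "x \<in> D" for x
  proof (cases "h x + q x \<le> T")
    case True
    then have "(x, h x + q x) \<in> S" unfolding S_def using that by simp
    then have "t \<le> h x + q x" using pt_min \<open>pt = (p, t)\<close> by fastforce
    then show ?thesis using p(2) by simp
  qed (use p in linarith)
  then show ?thesis using p(1) unfolding q_def by blast
qed

lemma prox_in_domain: "a > 0 \<Longrightarrow> prox a h D y \<in> D"
  and prox_minimal: "a > 0 \<Longrightarrow> x \<in> D \<Longrightarrow>
    h (prox a h D y) + (norm (prox a h D y - y))\<^sup>2 / (2 * a) \<le> h x + (norm (x - y))\<^sup>2 / (2 * a)"
  using someI_ex[OF prox_objective_attains_min[unfolded Bex_def]] unfolding prox_def by blast+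

text \<open>First-order optimality of the prox point: compare it with the points of the segment
  towards u and let them tend to the prox point.\<close>
lemma prox_variational_inequality:
  assumes "a > 0" and "u \<in> D"
  shows "h (prox a h D y) + ((y - prox a h D y) \<bullet> (u - prox a h D y)) / a \<le> h u"
proof -
  define p where "p = prox a h D y"
  have "p \<in> D" unfolding p_def using \<open>a > 0\<close> by (rule prox_in_domain)
  define Q where "Q = h u - h p + ((p - y) \<bullet> (u - p)) / a"
  define C where "C = (norm (u - p))\<^sup>2 / (2 * a)"
  have "0 \<le> C" unfolding C_def using \<open>a > 0\<close> by simp
  have segment: "0 \<le> Q + t * C" if t: "0 < t" "t \<le> 1" for t
  proof -
    define w where "w = (1 - t) *\<^sub>R p + t *\<^sub>R u"
    have "w \<in> D" unfolding w_def using D_convex \<open>p \<in> D\<close> \<open>u \<in> D\<close> t by (simp add: convex_alt)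
    then have min: "h p + (norm (p - y))\<^sup>2 / (2 * a) \<le> h w + (norm (w - y))\<^sup>2 / (2 * a)"
      unfolding p_def by (rule prox_minimal[OF \<open>a > 0\<close>])
    have conv: "h w \<le> (1 - t) * h p + t * h u"
      unfolding w_def using convex_onD[OF h_convex, of t p u] t \<open>p \<in> D\<close> \<open>u \<in> D\<close> by simp
    have wy: "w - y = (p - y) + t *\<^sub>R (u - p)" unfolding w_def by (simp add: algebra_simps)
    have "(norm (w - y))\<^sup>2 = (norm (p - y))\<^sup>2 + (2 * t * ((p - y) \<bullet> (u - p)) + t\<^sup>2 * (norm (u - p))\<^sup>2)"
      unfolding wy power2_norm_eq_inner
      by (simp add: inner_add_left inner_add_right algebra_simps power2_eq_square inner_commute)
    then have "(norm (w - y))\<^sup>2 / (2 * a)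
        = (norm (p - y))\<^sup>2 / (2 * a) + (2 * t * ((p - y) \<bullet> (u - p)) + t\<^sup>2 * (norm (u - p))\<^sup>2) / (2 * a)"
      by (simp add: add_divide_distrib)
    then have "0 \<le> t * (h u - h p) + (2 * t * ((p - y) \<bullet> (u - p)) + t\<^sup>2 * (norm (u - p))\<^sup>2) / (2 * a)"
      using min conv by (simp add: algebra_simps)
    also have "\<dots> = t * (Q + t * C)"
      unfolding Q_def C_def using \<open>a > 0\<close> by (simp add: field_simps power2_eq_square)
    finally show ?thesis using t by (simp add: zero_le_mult_iff)
  qed
  have "0 \<le> Q"
  proof (rule ccontr)
    assume "\<not> 0 \<le> Q"
    define t where "t = min 1 (- Q / (2 * (C + 1)))"
    have t: "0 < t" "t \<le> 1" unfolding t_def using \<open>\<not> 0 \<le> Q\<close> \<open>0 \<le> C\<close> by (auto simp: field_simps)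
    have "t * C \<le> - Q / (2 * (C + 1)) * C" unfolding t_def using \<open>0 \<le> C\<close> by (intro mult_right_mono) auto
    also have "\<dots> = - Q / 2 * (C / (C + 1))" using \<open>0 \<le> C\<close> by (simp add: field_simps)
    also have "\<dots> \<le> - Q / 2" using \<open>\<not> 0 \<le> Q\<close> \<open>0 \<le> C\<close> by (intro mult_left_le) auto
    finally show False using segment[OF t] \<open>\<not> 0 \<le> Q\<close> by simp
  qed
  moreover have "(y - p) \<bullet> (u - p) = - ((p - y) \<bullet> (u - p))"
    by (metis inner_minus_left minus_diff_eq)
  ultimately show ?thesis unfolding Q_def p_def[symmetric] by (simp add: diff_divide_distrib)
qed

lemma prox_nonexpansive:
  assumes "a > 0"
  shows "norm (prox a h D z1 - prox a h D z2) \<le> norm (z1 - z2)"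
proof -
  define p1 where "p1 = prox a h D z1"
  define p2 where "p2 = prox a h D z2"
  have "h p1 + ((z1 - p1) \<bullet> (p2 - p1)) / a \<le> h p2" "h p2 + ((z2 - p2) \<bullet> (p1 - p2)) / a \<le> h p1"
    unfolding p1_def p2_def using assms by (simp_all add: prox_variational_inequality prox_in_domain)
  then have "((z1 - p1) \<bullet> (p2 - p1) + (z2 - p2) \<bullet> (p1 - p2)) / a \<le> 0"
    unfolding add_divide_distrib by linarith
  then have "(z1 - p1) \<bullet> (p2 - p1) + (z2 - p2) \<bullet> (p1 - p2) \<le> 0"
    using assms by (simp add: divide_le_0_iff)
  moreover have "(z1 - p1) \<bullet> (p2 - p1) + (z2 - p2) \<bullet> (p1 - p2) = (norm (p1 - p2))\<^sup>2 - (z1 - z2) \<bullet> (p1 - p2)"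
    unfolding power2_norm_eq_inner by (simp add: inner_diff_left inner_diff_right inner_commute algebra_simps)
  ultimately have "norm (p1 - p2) * norm (p1 - p2) \<le> norm (z1 - z2) * norm (p1 - p2)"
    using norm_cauchy_schwarz[of "z1 - z2" "p1 - p2"] by (simp add: power2_eq_square)
  then show ?thesis unfolding p1_def[symmetric] p2_def[symmetric]
    by (cases "p1 = p2") (auto dest: mult_right_le_imp_le)
qed

lemma prox_borel_measurable [measurable]: "a > 0 \<Longrightarrow> prox a h D \<in> borel_measurable borel"
  by (intro borel_measurable_continuous_onI lipschitz_on_continuous_on[of 1] lipschitz_onI)
    (auto simp: dist_norm prox_nonexpansive)


lemma borel_measurable_comp_h:
  assumes Z: "Z \<in> borel_measurable M" and "\<And>\<omega>. Z \<omega> \<in> D"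
  shows "(\<lambda>\<omega>. h (Z \<omega>)) \<in> borel_measurable M"
  unfolding borel_measurable_iff_le
proof
  fix t :: real
  have "closed ((\<lambda>x. (x, t)) -` {(x, t). x \<in> D \<and> h x \<le> t})"
    by (rule continuous_closed_vimage[OF epigraph_closed]) (intro continuous_intros)
  then have "{x \<in> D. h x \<le> t} \<in> sets borel" by (simp add: vimage_def)
  from measurable_sets[OF Z this] show "{\<omega> \<in> space M. h (Z \<omega>) \<le> t} \<in> sets M"
    using assms(2) by (simp add: vimage_def Int_def conj_commute)
qed

end

locale prox_gradient = prox_operator h D for h :: "'a::euclidean_space \<Rightarrow> real" and D +
  fixes f :: "'a \<Rightarrow> real" and gradf :: "'a \<Rightarrow> 'a" and L :: real
  assumes f_convex: "convex_on UNIV f"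
    and f_grad: "\<And>x. (f has_derivative (\<lambda>v. gradf x \<bullet> v)) (at x)"
    and grad_lip: "\<And>x y. norm (gradf x - gradf y) \<le> L * norm (x - y)"
    and L_nonneg: "0 \<le> L"
begin

lemma f_borel_measurable [measurable]: "f \<in> borel_measurable borel"
  using f_grad by (intro borel_measurable_continuous_onI has_derivative_continuous_on) auto

lemma gradf_borel_measurable [measurable]: "gradf \<in> borel_measurable borel"
  by (intro borel_measurable_continuous_onI lipschitz_on_continuous_on[of L] lipschitz_onI)
    (auto simp: dist_norm grad_lip L_nonneg)

text \<open>The gradient error g - \<nabla>f(y) enters quadratically, plus a cross term against the step
  pb taken with the exact gradient; the latter is what vanishes in expectation.\<close>
lemma prox_gradient_step_inequality:
  fixes y g :: 'a
  assumes "a > 0" and "u \<in> D"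
  defines "p \<equiv> prox a h D (y - a *\<^sub>R g)" and "pb \<equiv> prox a h D (y - a *\<^sub>R gradf y)"
  shows "f p + h p \<le> f u + h u + ((norm (y - u))\<^sup>2 - (norm (p - u))\<^sup>2) / (2 * a)
       - (1 - L * a) / (2 * a) * (norm (y - p))\<^sup>2
       + a * (norm (g - gradf y))\<^sup>2 - (g - gradf y) \<bullet> (pb - u)"
proof -
  define e where "e = g - gradf y"
  define A where "A = y - p"
  define B where "B = p - u"
  have h_ge: "h p + ((y - a *\<^sub>R g - p) \<bullet> (u - p)) / a \<le> h u"
    unfolding p_def using assms(1,2) by (rule prox_variational_inequality)
  have f_le: "f p \<le> f y + gradf y \<bullet> (p - y) + L / 2 * (norm A)\<^sup>2"
    using descent_lemma[OF f_grad grad_lip, of p y] unfolding A_def by (simp add: norm_minus_commute)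
  have f_ge: "f y + gradf y \<bullet> (u - y) \<le> f u" by (rule convex_on_gradient_inequality[OF f_convex f_grad])
  have "norm (p - pb) \<le> norm ((y - a *\<^sub>R g) - (y - a *\<^sub>R gradf y))"
    unfolding p_def pb_def using \<open>a > 0\<close> by (rule prox_nonexpansive)
  also have "\<dots> = a * norm e"
    using \<open>a > 0\<close> by (simp add: e_def norm_minus_commute flip: scaleR_diff_right)
  finally have "norm e * norm (p - pb) \<le> a * (norm e)\<^sup>2"
    by (metis mult_left_mono norm_ge_zero power2_eq_square mult.left_commute)
  then have cross: "- (e \<bullet> (p - pb)) \<le> a * (norm e)\<^sup>2"
    using Cauchy_Schwarz_ineq2[of e "p - pb"] by linarith
  have "(y - a *\<^sub>R g - p) \<bullet> (u - p) = - (A \<bullet> B) + a * (g \<bullet> B)"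
    unfolding A_def B_def by (simp add: inner_diff_left inner_diff_right inner_commute algebra_simps)
  then have i1: "((y - a *\<^sub>R g - p) \<bullet> (u - p)) / a = - (A \<bullet> B) / a + g \<bullet> B"
    using \<open>a > 0\<close> by (simp add: field_simps)
  have "y - u = A + B" unfolding A_def B_def by simp
  then have "(norm (y - u))\<^sup>2 = (norm A)\<^sup>2 + 2 * (A \<bullet> B) + (norm B)\<^sup>2"
    unfolding power2_norm_eq_inner by (simp add: inner_add_left inner_add_right inner_commute)
  then have i2: "((norm (y - u))\<^sup>2 - (norm B)\<^sup>2) / (2 * a) = A \<bullet> B / a + (norm A)\<^sup>2 / (2 * a)"
    using \<open>a > 0\<close> by (simp add: field_simps)
  have i3: "gradf y \<bullet> (p - y) - gradf y \<bullet> (u - y) - g \<bullet> B = - (e \<bullet> (p - pb)) - e \<bullet> (pb - u)"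
    unfolding B_def e_def by (simp add: inner_diff_left inner_diff_right algebra_simps)
  have i4: "(1 - L * a) / (2 * a) * (norm A)\<^sup>2 = (norm A)\<^sup>2 / (2 * a) - L / 2 * (norm A)\<^sup>2"
    using \<open>a > 0\<close> by (simp add: field_simps)
  show ?thesis
    using h_ge f_le f_ge cross i1 i2 i3 i4 unfolding e_def[symmetric] A_def[symmetric] B_def[symmetric]
    by (simp add: algebra_simps)
qed

end

section \<open>Conditional second moments\<close>

lemma ennreal_integral_le_nn_integral:
  fixes w :: "'a \<Rightarrow> real"
  assumes "integrable M w"
  shows "ennreal (\<integral>x. w x \<partial>M) \<le> (\<integral>\<^sup>+x. ennreal (w x) \<partial>M)"
proof -
  have "integrable M (\<lambda>x. max (w x) 0)" using assms by (intro integrable_max) auto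
  have "ennreal (\<integral>x. w x \<partial>M) \<le> ennreal (\<integral>x. max (w x) 0 \<partial>M)"
    by (intro ennreal_leI integral_mono[OF assms \<open>integrable M (\<lambda>x. max (w x) 0)\<close>]) simp
  also have "\<dots> = (\<integral>\<^sup>+x. ennreal (max (w x) 0) \<partial>M)"
    by (rule nn_integral_eq_integral[symmetric]) (auto simp: \<open>integrable M (\<lambda>x. max (w x) 0)\<close>)
  also have "\<dots> = (\<integral>\<^sup>+x. ennreal (w x) \<partial>M)"
    by (intro nn_integral_cong) (simp add: ennreal_max_0)
  finally show ?thesis .
qed

context sigma_finite_subalgebra
begin

lemma nn_integral_nn_cond_exp:
  assumes [measurable]: "u \<in> borel_measurable M"
  shows "(\<integral>\<^sup>+\<omega>. nn_cond_exp M F u \<omega> \<partial>M) = (\<integral>\<^sup>+\<omega>. u \<omega> \<partial>M)"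
  using nn_cond_exp_intg[of "\<lambda>_. 1" u] by simp

lemma nn_cond_exp_finite_sum:
  assumes "finite I" and "\<And>i. i \<in> I \<Longrightarrow> u i \<in> borel_measurable M"
  shows "AE \<omega> in M. nn_cond_exp M F (\<lambda>\<omega>. \<Sum>i\<in>I. u i \<omega>) \<omega> = (\<Sum>i\<in>I. nn_cond_exp M F (u i) \<omega>)"
  using assms
proof (induction I rule: finite_induct)
  case empty
  have "AE \<omega> in M. (\<lambda>_. 0::ennreal) \<omega> = nn_cond_exp M F (\<lambda>_. 0) \<omega>"
    by (rule nn_cond_exp_F_meas) simp
  then show ?case by (auto elim!: AE_mp)
next
  case (insert j I)
  have "AE \<omega> in M. nn_cond_exp M F (u j) \<omega> + nn_cond_exp M F (\<lambda>\<omega>. \<Sum>i\<in>I. u i \<omega>) \<omega>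
      = nn_cond_exp M F (\<lambda>\<omega>. u j \<omega> + (\<Sum>i\<in>I. u i \<omega>)) \<omega>"
    using insert.prems by (intro nn_cond_exp_sum borel_measurable_sum) auto
  with insert show ?case by (auto elim!: AE_mp)
qed

text \<open>On an F-set where the conditional expectation Z is bounded, the product with Z is
  integrable, and E[X^2] \<ge> E[2 Z X - Z^2] = E[Z^2] holds there.\<close>
lemma nn_integral_real_cond_exp_square_le:
  fixes X :: "'a \<Rightarrow> real"
  assumes "finite_measure M" and X: "integrable M X" and [measurable]: "B \<in> sets F"
    and bounded: "\<And>\<omega>. \<omega> \<in> B \<Longrightarrow> \<bar>real_cond_exp M F X \<omega>\<bar> \<le> real n"
  shows "(\<integral>\<^sup>+\<omega>. indicator B \<omega> * ennreal ((real_cond_exp M F X \<omega>)\<^sup>2) \<partial>M)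
    \<le> (\<integral>\<^sup>+\<omega>. indicator B \<omega> * nn_cond_exp M F (\<lambda>\<omega>. ennreal ((X \<omega>)\<^sup>2)) \<omega> \<partial>M)"
proof -
  define Z where "Z = real_cond_exp M F X"
  have [measurable]: "X \<in> borel_measurable M" "Z \<in> borel_measurable F" "Z \<in> borel_measurable M"
    "B \<in> sets M" using X subalg unfolding Z_def subalgebra_def by auto
  define c where "c \<omega> = indicator B \<omega> * Z \<omega>" for \<omega>
  have [measurable]: "c \<in> borel_measurable F" "c \<in> borel_measurable M" unfolding c_def by measurable
  have c_bounded: "\<bar>c \<omega>\<bar> \<le> n" for \<omega> using bounded unfolding c_def Z_def by (auto simp: indicator_def)
  have int_cX: "integrable M (\<lambda>\<omega>. c \<omega> * X \<omega>)"
    by (rule Bochner_Integration.integrable_bound[where f="\<lambda>\<omega>. n * X \<omega>"])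
      (use X c_bounded in \<open>auto simp: abs_mult intro!: mult_right_mono\<close>)
  have int_Z2: "integrable M (\<lambda>\<omega>. indicator B \<omega> * (Z \<omega>)\<^sup>2)"
  proof (rule Bochner_Integration.integrable_bound[where f="\<lambda>\<omega>. n\<^sup>2"])
    show "integrable M (\<lambda>\<omega>. n\<^sup>2)" using \<open>finite_measure M\<close> by (simp add: finite_measure.integrable_const)
    show "AE \<omega> in M. norm (indicator B \<omega> * (Z \<omega>)\<^sup>2) \<le> norm (n\<^sup>2)"
      using bounded unfolding Z_def by (auto simp: indicator_def abs_le_square_iff[symmetric])
  qed measurable
  define w where "w \<omega> = 2 * (c \<omega> * X \<omega>) - indicator B \<omega> * (Z \<omega>)\<^sup>2" for \<omega>
  have "(\<integral>\<omega>. c \<omega> * X \<omega> \<partial>M) = (\<integral>\<omega>. c \<omega> * Z \<omega> \<partial>M)"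
    unfolding Z_def by (rule real_cond_exp_intg(2)[symmetric]) (use int_cX in auto)
  then have int_w: "(\<integral>\<omega>. w \<omega> \<partial>M) = (\<integral>\<omega>. indicator B \<omega> * (Z \<omega>)\<^sup>2 \<partial>M)"
    unfolding w_def c_def using int_cX int_Z2 by (simp add: power2_eq_square mult.assoc c_def)
  have w_le: "ennreal (w \<omega>) \<le> indicator B \<omega> * ennreal ((X \<omega>)\<^sup>2)" for \<omega>
  proof -
    have "indicator B \<omega> * (X \<omega>)\<^sup>2 - w \<omega> = indicator B \<omega> * (X \<omega> - Z \<omega>)\<^sup>2"
      unfolding w_def c_def by (simp add: power2_eq_square algebra_simps)
    then have "ennreal (w \<omega>) \<le> ennreal (indicator B \<omega> * (X \<omega>)\<^sup>2)"
      by (intro ennreal_leI) (metis diff_ge_0_iff_ge indicator_pos_le zero_le_mult_iff zero_le_power2)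
    also have "\<dots> = indicator B \<omega> * ennreal ((X \<omega>)\<^sup>2)" by (simp add: indicator_def)
    finally show ?thesis .
  qed
  have "(\<integral>\<^sup>+\<omega>. indicator B \<omega> * ennreal ((Z \<omega>)\<^sup>2) \<partial>M) = ennreal (\<integral>\<omega>. w \<omega> \<partial>M)"
    unfolding int_w using int_Z2 by (subst nn_integral_eq_integral[symmetric]) (auto intro!: nn_integral_cong simp: indicator_def)
  also have "\<dots> \<le> (\<integral>\<^sup>+\<omega>. ennreal (w \<omega>) \<partial>M)"
    by (rule ennreal_integral_le_nn_integral) (use int_cX int_Z2 in \<open>simp add: w_def\<close>)
  also have "\<dots> \<le> (\<integral>\<^sup>+\<omega>. indicator B \<omega> * ennreal ((X \<omega>)\<^sup>2) \<partial>M)"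
    by (intro nn_integral_mono w_le)
  also have "\<dots> = (\<integral>\<^sup>+\<omega>. indicator B \<omega> * nn_cond_exp M F (\<lambda>\<omega>. ennreal ((X \<omega>)\<^sup>2)) \<omega> \<partial>M)"
    by (rule nn_cond_exp_intg[symmetric]) measurable
  finally show ?thesis unfolding Z_def .
qed

text \<open>Conditional Jensen inequality for the square. X^2 need not be integrable, so the right-hand
  side is the nonnegative conditional expectation.\<close>
lemma real_cond_exp_square_le_nn_cond_exp:
  fixes X :: "'a \<Rightarrow> real"
  assumes "finite_measure M" and X: "integrable M X"
  shows "AE \<omega> in M. ennreal ((real_cond_exp M F X \<omega>)\<^sup>2) \<le> nn_cond_exp M F (\<lambda>\<omega>. ennreal ((X \<omega>)\<^sup>2)) \<omega>"
proof -
  define Z where "Z = real_cond_exp M F X"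
  define N where "N = nn_cond_exp M F (\<lambda>\<omega>. ennreal ((X \<omega>)\<^sup>2))"
  have [measurable]: "X \<in> borel_measurable M" "Z \<in> borel_measurable F" "N \<in> borel_measurable F"
    "Z \<in> borel_measurable M" "N \<in> borel_measurable M" using X unfolding Z_def N_def by auto
  have violation_null: "AE \<omega> in M. \<not> (N \<omega> < ennreal ((Z \<omega>)\<^sup>2) \<and> \<bar>Z \<omega>\<bar> \<le> real n)" for n :: nat
  proof -
    define B where "B = {\<omega> \<in> space M. N \<omega> < ennreal ((Z \<omega>)\<^sup>2) \<and> \<bar>Z \<omega>\<bar> \<le> real n}"
    have B_eq: "B = {\<omega> \<in> space F. N \<omega> < ennreal ((Z \<omega>)\<^sup>2) \<and> \<bar>Z \<omega>\<bar> \<le> real n}"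
      using subalg unfolding B_def by (simp add: subalgebra_def)
    have [measurable]: "B \<in> sets F" unfolding B_eq by measurable
    then have [measurable]: "B \<in> sets M" using subalg by (auto simp: subalgebra_def)
    define G where "G \<omega> = indicator B \<omega> * ennreal ((Z \<omega>)\<^sup>2)" for \<omega>
    define H where "H \<omega> = indicator B \<omega> * N \<omega>" for \<omega>
    have [measurable]: "G \<in> borel_measurable M" "H \<in> borel_measurable M"
      unfolding G_def H_def by measurable
    have H_le: "H \<omega> \<le> G \<omega>" for \<omega> unfolding H_def G_def B_def by (auto simp: indicator_def less_imp_le)
    have "(\<integral>\<^sup>+\<omega>. G \<omega> \<partial>M) \<le> (\<integral>\<^sup>+\<omega>. ennreal ((real n)\<^sup>2) \<partial>M)"
      unfolding G_def B_def by (intro nn_integral_mono) (auto simp: indicator_def abs_le_square_iff[symmetric])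
    then have "(\<integral>\<^sup>+\<omega>. G \<omega> \<partial>M) \<noteq> \<infinity>"
      using \<open>finite_measure M\<close> by (auto simp: finite_measure.emeasure_finite top_unique ennreal_mult_eq_top_iff)
    moreover have "(\<integral>\<^sup>+\<omega>. H \<omega> \<partial>M) \<le> (\<integral>\<^sup>+\<omega>. G \<omega> \<partial>M)" by (intro nn_integral_mono H_le)
    ultimately have "(\<integral>\<^sup>+\<omega>. H \<omega> \<partial>M) \<noteq> \<infinity>" by (auto simp: top_unique)
    moreover have "(\<integral>\<^sup>+\<omega>. G \<omega> \<partial>M) \<le> (\<integral>\<^sup>+\<omega>. H \<omega> \<partial>M)"
      unfolding G_def H_def N_def Z_def
      by (rule nn_integral_real_cond_exp_square_le[OF assms \<open>B \<in> sets F\<close>]) (auto simp: B_def Z_def)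
    ultimately have "AE \<omega> in M. G \<omega> \<le> H \<omega>"
      using nn_integral_less[of H M G] H_le by fastforce
    with AE_space show ?thesis
      by eventually_elim (auto simp: G_def H_def B_def indicator_def)
  qed
  have "AE \<omega> in M. \<forall>n::nat. \<not> (N \<omega> < ennreal ((Z \<omega>)\<^sup>2) \<and> \<bar>Z \<omega>\<bar> \<le> real n)"
    unfolding AE_all_countable using violation_null by blast
  then show ?thesis
  proof eventually_elim
    case (elim \<omega>)
    obtain n :: nat where "\<bar>Z \<omega>\<bar> \<le> real n" using real_arch_simple by blast
    with elim show ?case unfolding Z_def N_def by (meson not_less)
  qed
qed

end

lemma norm_add_square_le: "(norm (u + v))\<^sup>2 \<le> 2 * (norm u)\<^sup>2 + 2 * (norm v)\<^sup>2"
proof -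
  have "(norm (u + v))\<^sup>2 \<le> (norm u + norm v)\<^sup>2" by (intro power_mono norm_triangle_ineq) auto
  also have "\<dots> \<le> 2 * (norm u)\<^sup>2 + 2 * (norm v)\<^sup>2"
    using zero_le_power2[of "norm u - norm v"] by (simp add: power2_eq_square algebra_simps)
  finally show ?thesis .
qed

definition square_integrable :: "'a measure \<Rightarrow> ('a \<Rightarrow> 'b::euclidean_space) \<Rightarrow> bool" where
  "square_integrable M Z \<longleftrightarrow> Z \<in> borel_measurable M \<and> integrable M (\<lambda>\<omega>. (norm (Z \<omega>))\<^sup>2)"

lemma square_integrableD:
  "square_integrable M Z \<Longrightarrow> Z \<in> borel_measurable M"
  "square_integrable M Z \<Longrightarrow> integrable M (\<lambda>\<omega>. (norm (Z \<omega>))\<^sup>2)"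
  unfolding square_integrable_def by auto

context finite_measure
begin

lemma square_integrable_affine_bound:
  fixes Z :: "'a \<Rightarrow> 'b::euclidean_space" and W :: "'a \<Rightarrow> 'c::euclidean_space"
  assumes Z: "square_integrable M Z" and W: "W \<in> borel_measurable M"
    and bound: "\<And>\<omega>. \<omega> \<in> space M \<Longrightarrow> norm (W \<omega>) \<le> a + b * norm (Z \<omega>)" and "0 \<le> b"
  shows "square_integrable M W"
  unfolding square_integrable_def
proof
  show "integrable M (\<lambda>\<omega>. (norm (W \<omega>))\<^sup>2)"
  proof (rule Bochner_Integration.integrable_bound[where f="\<lambda>\<omega>. 2 * a\<^sup>2 + 2 * b\<^sup>2 * (norm (Z \<omega>))\<^sup>2"])
    show "integrable M (\<lambda>\<omega>. 2 * a\<^sup>2 + 2 * b\<^sup>2 * (norm (Z \<omega>))\<^sup>2)"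
      using Z by (auto simp: square_integrable_def)
    show "AE \<omega> in M. norm ((norm (W \<omega>))\<^sup>2) \<le> norm (2 * a\<^sup>2 + 2 * b\<^sup>2 * (norm (Z \<omega>))\<^sup>2)"
    proof (intro AE_I2)
      fix \<omega> assume "\<omega> \<in> space M"
      then have "(norm (W \<omega>))\<^sup>2 \<le> (a + b * norm (Z \<omega>))\<^sup>2"
        using bound \<open>0 \<le> b\<close> by (intro power_mono) auto
      also have "\<dots> \<le> 2 * a\<^sup>2 + 2 * b\<^sup>2 * (norm (Z \<omega>))\<^sup>2"
        using norm_add_square_le[of a "b * norm (Z \<omega>)"] by (simp add: power_mult_distrib)
      finally show "norm ((norm (W \<omega>))\<^sup>2) \<le> norm (2 * a\<^sup>2 + 2 * b\<^sup>2 * (norm (Z \<omega>))\<^sup>2)" by simp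
    qed
  qed (use W in measurable)
qed (rule W)

lemma square_integrable_const: "square_integrable M (\<lambda>_. c)"
  unfolding square_integrable_def by simp

lemma square_integrable_add:
  fixes Z W :: "'a \<Rightarrow> 'b::euclidean_space"
  assumes Z: "square_integrable M Z" and W: "square_integrable M W"
  shows "square_integrable M (\<lambda>\<omega>. Z \<omega> + W \<omega>)"
  unfolding square_integrable_def
proof
  have [measurable]: "Z \<in> borel_measurable M" "W \<in> borel_measurable M"
    using Z W by (auto simp: square_integrable_def)
  show "(\<lambda>\<omega>. Z \<omega> + W \<omega>) \<in> borel_measurable M" by measurable
  show "integrable M (\<lambda>\<omega>. (norm (Z \<omega> + W \<omega>))\<^sup>2)"
    by (rule Bochner_Integration.integrable_bound[where f="\<lambda>\<omega>. 2 * (norm (Z \<omega>))\<^sup>2 + 2 * (norm (W \<omega>))\<^sup>2"])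
      (use Z W norm_add_square_le in \<open>auto simp: square_integrable_def\<close>)
qed

lemma square_integrable_scaleR:
  "square_integrable M Z \<Longrightarrow> square_integrable M (\<lambda>\<omega>. c *\<^sub>R Z \<omega>)"
  unfolding square_integrable_def by (auto simp: power_mult_distrib)

lemma square_integrable_diff:
  assumes "square_integrable M Z" and "square_integrable M W"
  shows "square_integrable M (\<lambda>\<omega>. Z \<omega> - W \<omega>)"
  using square_integrable_add[OF assms(1) square_integrable_scaleR[OF assms(2), of "- 1"]] by simp

lemma integrable_inner_square_integrable:
  fixes Z W :: "'a \<Rightarrow> 'b::euclidean_space"
  assumes Z: "square_integrable M Z" and W: "square_integrable M W"
  shows "integrable M (\<lambda>\<omega>. Z \<omega> \<bullet> W \<omega>)"
proof (rule Bochner_Integration.integrable_bound[where f="\<lambda>\<omega>. (norm (Z \<omega>))\<^sup>2 + (norm (W \<omega>))\<^sup>2"])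
  have [measurable]: "Z \<in> borel_measurable M" "W \<in> borel_measurable M"
    using Z W by (auto simp: square_integrable_def)
  show "integrable M (\<lambda>\<omega>. (norm (Z \<omega>))\<^sup>2 + (norm (W \<omega>))\<^sup>2)"
    using Z W by (auto simp: square_integrable_def)
  show "(\<lambda>\<omega>. Z \<omega> \<bullet> W \<omega>) \<in> borel_measurable M" by measurable
  show "AE \<omega> in M. norm (Z \<omega> \<bullet> W \<omega>) \<le> norm ((norm (Z \<omega>))\<^sup>2 + (norm (W \<omega>))\<^sup>2)"
  proof (intro AE_I2)
    fix \<omega>
    have "\<bar>Z \<omega> \<bullet> W \<omega>\<bar> \<le> norm (Z \<omega>) * norm (W \<omega>)" by (rule Cauchy_Schwarz_ineq2)
    also have "\<dots> \<le> (norm (Z \<omega>))\<^sup>2 + (norm (W \<omega>))\<^sup>2"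
      using sum_squares_bound[of "norm (Z \<omega>)" "norm (W \<omega>)"]
        mult_nonneg_nonneg[OF norm_ge_zero norm_ge_zero, of "Z \<omega>" "W \<omega>"] by linarith
    finally show "norm (Z \<omega> \<bullet> W \<omega>) \<le> norm ((norm (Z \<omega>))\<^sup>2 + (norm (W \<omega>))\<^sup>2)" by simp
  qed
qed

lemma square_integrable_integrable:
  fixes Z :: "'a \<Rightarrow> 'b::euclidean_space"
  assumes "square_integrable M Z"
  shows "integrable M Z"
proof (rule Bochner_Integration.integrable_bound[where f="\<lambda>\<omega>. 1 + (norm (Z \<omega>))\<^sup>2"])
  show "integrable M (\<lambda>\<omega>. 1 + (norm (Z \<omega>))\<^sup>2)" "Z \<in> borel_measurable M"
    using assms by (auto simp: square_integrable_def)
  have "norm (Z \<omega>) \<le> 1 + (norm (Z \<omega>))\<^sup>2" for \<omega>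
  proof -
    have "2 * norm (Z \<omega>) \<le> 1 + (norm (Z \<omega>))\<^sup>2"
      using zero_le_power2[of "norm (Z \<omega>) - 1"] by (simp add: power2_eq_square algebra_simps)
    then show ?thesis using norm_ge_zero[of "Z \<omega>"] by linarith
  qed
  then show "AE \<omega> in M. norm (Z \<omega>) \<le> norm (1 + (norm (Z \<omega>))\<^sup>2)" by simp
qed

end

lemma norm_power2_eq_sum_Basis: "(norm (x::'a::euclidean_space))\<^sup>2 = (\<Sum>i\<in>Basis. (x \<bullet> i)\<^sup>2)"
  unfolding power2_norm_eq_inner by (subst euclidean_inner) (simp add: power2_eq_square)

context sigma_finite_subalgebra
begin

lemma sum_real_cond_exp_square_le_nn_cond_exp:
  fixes R :: "'a \<Rightarrow> 'b::euclidean_space"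
  assumes "finite_measure M" and "integrable M R"
  shows "AE \<omega> in M. ennreal (\<Sum>i\<in>Basis. (real_cond_exp M F (\<lambda>\<omega>. R \<omega> \<bullet> i) \<omega>)\<^sup>2)
    \<le> nn_cond_exp M F (\<lambda>\<omega>. ennreal ((norm (R \<omega>))\<^sup>2)) \<omega>"
proof -
  have "AE \<omega> in M. \<forall>i\<in>Basis. ennreal ((real_cond_exp M F (\<lambda>\<omega>. R \<omega> \<bullet> i) \<omega>)\<^sup>2)
      \<le> nn_cond_exp M F (\<lambda>\<omega>. ennreal ((R \<omega> \<bullet> i)\<^sup>2)) \<omega>"
    using assms by (intro AE_finite_allI finite_Basis real_cond_exp_square_le_nn_cond_exp integrable_inner_left)
  moreover have "AE \<omega> in M. nn_cond_exp M F (\<lambda>\<omega>. \<Sum>i\<in>Basis. ennreal ((R \<omega> \<bullet> i)\<^sup>2)) \<omega>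
      = (\<Sum>i\<in>Basis. nn_cond_exp M F (\<lambda>\<omega>. ennreal ((R \<omega> \<bullet> i)\<^sup>2)) \<omega>)"
    using assms(2) by (intro nn_cond_exp_finite_sum) auto
  ultimately show ?thesis
  proof eventually_elim
    case (elim \<omega>)
    have "ennreal (\<Sum>i\<in>Basis. (real_cond_exp M F (\<lambda>\<omega>. R \<omega> \<bullet> i) \<omega>)\<^sup>2)
        \<le> (\<Sum>i\<in>Basis. nn_cond_exp M F (\<lambda>\<omega>. ennreal ((R \<omega> \<bullet> i)\<^sup>2)) \<omega>)"
      using elim(1) by (simp add: sum_mono flip: sum_ennreal)
    also have "\<dots> = nn_cond_exp M F (\<lambda>\<omega>. ennreal ((norm (R \<omega>))\<^sup>2)) \<omega>"
      using elim(2) by (simp add: norm_power2_eq_sum_Basis)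
    finally show ?case .
  qed
qed

lemma integral_inner_diff_cond_exp_eq_0:
  fixes G m W :: "'a \<Rightarrow> 'b::euclidean_space"
  assumes "finite_measure M" and G: "square_integrable M G" and m: "square_integrable M m"
    and W: "square_integrable M W" "W \<in> borel_measurable F"
    and cond_exp: "\<And>i. i \<in> Basis \<Longrightarrow> AE \<omega> in M. real_cond_exp M F (\<lambda>\<omega>. G \<omega> \<bullet> i) \<omega> = m \<omega> \<bullet> i"
  shows "(\<integral>\<omega>. (G \<omega> - m \<omega>) \<bullet> W \<omega> \<partial>M) = 0"
proof -
  interpret finite_measure M by (rule assms(1))
  have [measurable]: "G \<in> borel_measurable M" "m \<in> borel_measurable M" "W \<in> borel_measurable M"
    "W \<in> borel_measurable F" using G m W by (auto simp: square_integrable_def)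
  have coordinate_integrable: "integrable M (\<lambda>\<omega>. (W \<omega> \<bullet> i) * (Z \<omega> \<bullet> i))"
    if "i \<in> Basis" "square_integrable M Z" for i and Z :: "'a \<Rightarrow> 'b"
  proof -
    have "square_integrable M (\<lambda>\<omega>. (W \<omega> \<bullet> i) *\<^sub>R i)"
      by (rule square_integrable_affine_bound[OF W(1), of _ 0 1])
        (use that(1) in \<open>auto simp: Basis_le_norm\<close>)
    from integrable_inner_square_integrable[OF this that(2)] show ?thesis
      by (simp add: inner_commute[of i])
  qed
  have "(\<integral>\<omega>. (W \<omega> \<bullet> i) * ((G \<omega> - m \<omega>) \<bullet> i) \<partial>M) = 0" if i: "i \<in> Basis" for i
  proof -
    have "(\<integral>\<omega>. (W \<omega> \<bullet> i) * (G \<omega> \<bullet> i) \<partial>M)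
        = (\<integral>\<omega>. (W \<omega> \<bullet> i) * real_cond_exp M F (\<lambda>\<omega>. G \<omega> \<bullet> i) \<omega> \<partial>M)"
      by (rule real_cond_exp_intg(2)[symmetric]) (use coordinate_integrable[OF i G] in auto)
    also have "\<dots> = (\<integral>\<omega>. (W \<omega> \<bullet> i) * (m \<omega> \<bullet> i) \<partial>M)"
      by (intro integral_cong_AE) (use cond_exp[OF i] measurable_from_subalg[OF subalg] in auto)
    finally show ?thesis
      using coordinate_integrable[OF i G] coordinate_integrable[OF i m]
      by (simp add: inner_diff_left right_diff_distrib)
  qed
  moreover have "(G \<omega> - m \<omega>) \<bullet> W \<omega> = (\<Sum>i\<in>Basis. (W \<omega> \<bullet> i) * ((G \<omega> - m \<omega>) \<bullet> i))" for \<omega>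
    by (subst euclidean_inner) (simp add: mult.commute)
  moreover have "integrable M (\<lambda>\<omega>. (W \<omega> \<bullet> i) * ((G \<omega> - m \<omega>) \<bullet> i))" if "i \<in> Basis" for i
    using coordinate_integrable[OF that square_integrable_diff[OF G m]] .
  ultimately show ?thesis by (simp add: Bochner_Integration.integral_sum)
qed

end


text \<open>The conditional second moment of e is bounded through the conditional mean of R, and R
  is within norm e of the F-measurable Rb. Since eta^2 \<le> 1 this bound closes on itself: the
  conditional second moment of e is at most |Rb|^2 + 2c, which gives square integrability
  before any expectation is taken.\<close>
locale self_bounded_error = sigma_finite_subalgebra M F + prob_space M
  for M :: "'a measure" and F +
  fixes e R Rb :: "'a \<Rightarrow> 'b::euclidean_space" and \<eta> c :: real
  assumes e_integrable: "integrable M e" and R_measurable [measurable]: "R \<in> borel_measurable M"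
    and Rb_measurable [measurable]: "Rb \<in> borel_measurable F"
    and Rb_square_integrable: "square_integrable M Rb"
    and R_near_Rb: "\<And>\<omega>. norm (R \<omega> - Rb \<omega>) \<le> norm (e \<omega>)"
    and eta_le_1: "\<eta>\<^sup>2 \<le> 1" and c_nonneg: "0 \<le> c"
    and cond_bound: "AE \<omega> in M. nn_cond_exp M F (\<lambda>\<omega>. ennreal ((norm (e \<omega>))\<^sup>2)) \<omega>
      \<le> ennreal (\<eta>\<^sup>2 / 4 * (\<Sum>i\<in>Basis. (real_cond_exp M F (\<lambda>\<omega>. R \<omega> \<bullet> i) \<omega>)\<^sup>2) + c)"
begin

abbreviation "N \<equiv> nn_cond_exp M F (\<lambda>\<omega>. ennreal ((norm (e \<omega>))\<^sup>2))"

abbreviation "S \<omega> \<equiv> \<Sum>i\<in>Basis. (real_cond_exp M F (\<lambda>\<omega>. R \<omega> \<bullet> i) \<omega>)\<^sup>2"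

lemma e_measurable [measurable]: "e \<in> borel_measurable M"
  using e_integrable by auto

lemma Rb_measurable_M [measurable]: "Rb \<in> borel_measurable M"
  by (rule measurable_from_subalg[OF subalg Rb_measurable])

lemma R_integrable: "integrable M R"
proof (rule Bochner_Integration.integrable_bound[where f="\<lambda>\<omega>. norm (Rb \<omega>) + norm (e \<omega>)"])
  show "integrable M (\<lambda>\<omega>. norm (Rb \<omega>) + norm (e \<omega>))"
    using square_integrable_integrable[OF Rb_square_integrable] e_integrable by auto
  show "AE \<omega> in M. norm (R \<omega>) \<le> norm (norm (Rb \<omega>) + norm (e \<omega>))"
    using R_near_Rb norm_triangle_ineq2 by (smt (verit) AE_I2 real_norm_def)
qed simp

lemma R_square_le: "(norm (R \<omega>))\<^sup>2 \<le> 2 * (norm (Rb \<omega>))\<^sup>2 + 2 * (norm (e \<omega>))\<^sup>2"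
proof -
  have "(norm (R \<omega> - Rb \<omega>))\<^sup>2 \<le> (norm (e \<omega>))\<^sup>2" using R_near_Rb[of \<omega>] by (simp add: power_mono)
  moreover have "(norm (R \<omega>))\<^sup>2 \<le> 2 * (norm (Rb \<omega>))\<^sup>2 + 2 * (norm (R \<omega> - Rb \<omega>))\<^sup>2"
    using norm_add_square_le[of "Rb \<omega>" "R \<omega> - Rb \<omega>"] by simp
  ultimately show ?thesis by linarith
qed

lemma nn_cond_exp_R_square_le:
  "AE \<omega> in M. nn_cond_exp M F (\<lambda>\<omega>. ennreal ((norm (R \<omega>))\<^sup>2)) \<omega> \<le> ennreal (2 * (norm (Rb \<omega>))\<^sup>2) + 2 * N \<omega>"
proof -
  have "ennreal ((norm (R \<omega>))\<^sup>2) \<le> ennreal (2 * (norm (Rb \<omega>))\<^sup>2 + 2 * (norm (e \<omega>))\<^sup>2)" for \<omega>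
    using R_square_le by (rule ennreal_leI)
  then have "AE \<omega> in M. nn_cond_exp M F (\<lambda>\<omega>. ennreal ((norm (R \<omega>))\<^sup>2)) \<omega>
      \<le> nn_cond_exp M F (\<lambda>\<omega>. ennreal (2 * (norm (Rb \<omega>))\<^sup>2) + 2 * ennreal ((norm (e \<omega>))\<^sup>2)) \<omega>"
    by (intro nn_cond_exp_mono AE_I2) (auto simp: ennreal_plus ennreal_mult)
  moreover have "AE \<omega> in M. nn_cond_exp M F (\<lambda>\<omega>. ennreal (2 * (norm (Rb \<omega>))\<^sup>2)) \<omega>
      + nn_cond_exp M F (\<lambda>\<omega>. 2 * ennreal ((norm (e \<omega>))\<^sup>2)) \<omega>
      = nn_cond_exp M F (\<lambda>\<omega>. ennreal (2 * (norm (Rb \<omega>))\<^sup>2) + 2 * ennreal ((norm (e \<omega>))\<^sup>2)) \<omega>"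
    by (rule nn_cond_exp_sum) measurable
  moreover have "AE \<omega> in M. ennreal (2 * (norm (Rb \<omega>))\<^sup>2)
      = nn_cond_exp M F (\<lambda>\<omega>. ennreal (2 * (norm (Rb \<omega>))\<^sup>2)) \<omega>"
    by (rule nn_cond_exp_F_meas) measurable
  moreover have "AE \<omega> in M. (\<lambda>_. 2) \<omega> * N \<omega>
      = nn_cond_exp M F (\<lambda>\<omega>. (\<lambda>_. 2) \<omega> * ennreal ((norm (e \<omega>))\<^sup>2)) \<omega>"
    by (rule nn_cond_exp_prod) measurable
  ultimately show ?thesis by eventually_elim simp
qed

lemma nn_cond_exp_error_le: "AE \<omega> in M. N \<omega> \<le> ennreal ((norm (Rb \<omega>))\<^sup>2 + 2 * c)"
  using cond_bound nn_cond_exp_R_square_le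
    sum_real_cond_exp_square_le_nn_cond_exp[OF finite_measure_axioms R_integrable]
proof eventually_elim
  case (elim \<omega>)
  then have "N \<omega> \<noteq> \<infinity>" by (auto simp: top_unique)
  then obtain n where Nn: "N \<omega> = ennreal n" and "0 \<le> n" by (cases "N \<omega>") auto
  have "ennreal (S \<omega>) \<le> ennreal (2 * (norm (Rb \<omega>))\<^sup>2) + 2 * ennreal n"
    using order_trans[OF elim(3) elim(2)] Nn by simp
  also have "\<dots> = ennreal (2 * (norm (Rb \<omega>))\<^sup>2 + 2 * n)"
    using \<open>0 \<le> n\<close> by (simp add: ennreal_plus ennreal_mult)
  finally have S_le: "S \<omega> \<le> 2 * (norm (Rb \<omega>))\<^sup>2 + 2 * n"
    using \<open>0 \<le> n\<close> by (subst (asm) ennreal_le_iff) auto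
  have "ennreal n \<le> ennreal (\<eta>\<^sup>2 / 4 * S \<omega> + c)" using elim(1) Nn by simp
  moreover have "0 \<le> \<eta>\<^sup>2 / 4 * S \<omega> + c" using c_nonneg by (simp add: sum_nonneg)
  ultimately have "n \<le> \<eta>\<^sup>2 / 4 * S \<omega> + c" by simp
  also have "\<dots> \<le> \<eta>\<^sup>2 * ((norm (Rb \<omega>))\<^sup>2 + n) / 2 + c"
    using mult_left_mono[OF S_le, of "\<eta>\<^sup>2"] by (simp add: algebra_simps)
  also have "\<dots> \<le> ((norm (Rb \<omega>))\<^sup>2 + n) / 2 + c"
    using mult_right_mono[OF eta_le_1, of "(norm (Rb \<omega>))\<^sup>2 + n"] \<open>0 \<le> n\<close> by simp
  finally have "n \<le> (norm (Rb \<omega>))\<^sup>2 + 2 * c" by (simp add: field_simps)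
  then show ?case using Nn by (simp add: ennreal_leI)
qed

lemma e_square_integrable: "square_integrable M e"
  unfolding square_integrable_def
proof (intro conjI integrableI_bounded)
  have "(\<integral>\<^sup>+\<omega>. ennreal (norm ((norm (e \<omega>))\<^sup>2)) \<partial>M) = (\<integral>\<^sup>+\<omega>. N \<omega> \<partial>M)"
    by (simp add: nn_integral_nn_cond_exp)
  also have "\<dots> \<le> (\<integral>\<^sup>+\<omega>. ennreal ((norm (Rb \<omega>))\<^sup>2 + 2 * c) \<partial>M)"
    by (rule nn_integral_mono_AE[OF nn_cond_exp_error_le])
  also have "\<dots> = ennreal (\<integral>\<omega>. (norm (Rb \<omega>))\<^sup>2 + 2 * c \<partial>M)"
    using square_integrableD(2)[OF Rb_square_integrable] c_nonneg by (intro nn_integral_eq_integral) auto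
  finally show "(\<integral>\<^sup>+\<omega>. ennreal (norm ((norm (e \<omega>))\<^sup>2)) \<partial>M) < \<infinity>"
    by (simp add: le_less_trans)
qed simp_all

lemma R_square_integrable: "square_integrable M R"
  unfolding square_integrable_def
proof
  show "integrable M (\<lambda>\<omega>. (norm (R \<omega>))\<^sup>2)"
    by (rule Bochner_Integration.integrable_bound[where f="\<lambda>\<omega>. 2 * (norm (Rb \<omega>))\<^sup>2 + 2 * (norm (e \<omega>))\<^sup>2"])
      (use square_integrableD(2)[OF Rb_square_integrable] square_integrableD(2)[OF e_square_integrable]
        R_square_le in auto)
qed simp

lemma expected_error_le: "(\<integral>\<omega>. (norm (e \<omega>))\<^sup>2 \<partial>M) \<le> \<eta>\<^sup>2 / 4 * (\<integral>\<omega>. (norm (R \<omega>))\<^sup>2 \<partial>M) + c"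
proof -
  have "ennreal (\<integral>\<omega>. (norm (e \<omega>))\<^sup>2 \<partial>M) = (\<integral>\<^sup>+\<omega>. N \<omega> \<partial>M)"
    using square_integrableD(2)[OF e_square_integrable]
    by (simp add: nn_integral_nn_cond_exp nn_integral_eq_integral[symmetric])
  also have "\<dots> \<le> (\<integral>\<^sup>+\<omega>. ennreal (\<eta>\<^sup>2 / 4) * ennreal (S \<omega>) + ennreal c \<partial>M)"
  proof (rule nn_integral_mono_AE)
    have "ennreal (\<eta>\<^sup>2 / 4 * S \<omega> + c) = ennreal (\<eta>\<^sup>2 / 4) * ennreal (S \<omega>) + ennreal c" for \<omega>
    proof -
      have "ennreal (\<eta>\<^sup>2 / 4 * S \<omega> + c) = ennreal (\<eta>\<^sup>2 / 4 * S \<omega>) + ennreal c"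
        using c_nonneg by (intro ennreal_plus) (auto intro!: mult_nonneg_nonneg sum_nonneg)
      also have "ennreal (\<eta>\<^sup>2 / 4 * S \<omega>) = ennreal (\<eta>\<^sup>2 / 4) * ennreal (S \<omega>)"
        by (intro ennreal_mult') (auto intro: sum_nonneg)
      finally show ?thesis .
    qed
    then show "AE \<omega> in M. N \<omega> \<le> ennreal (\<eta>\<^sup>2 / 4) * ennreal (S \<omega>) + ennreal c"
      using cond_bound by simp
  qed
  also have "\<dots> = ennreal (\<eta>\<^sup>2 / 4) * (\<integral>\<^sup>+\<omega>. ennreal (S \<omega>) \<partial>M) + ennreal c"
    by (subst nn_integral_add) (auto simp: nn_integral_cmult emeasure_space_1)
  also have "\<dots> \<le> ennreal (\<eta>\<^sup>2 / 4) * (\<integral>\<^sup>+\<omega>. ennreal ((norm (R \<omega>))\<^sup>2) \<partial>M) + ennreal c"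
    using nn_integral_mono_AE[OF sum_real_cond_exp_square_le_nn_cond_exp[OF finite_measure_axioms R_integrable]]
    by (intro add_right_mono mult_left_mono) (simp_all add: nn_integral_nn_cond_exp)
  also have "(\<integral>\<^sup>+\<omega>. ennreal ((norm (R \<omega>))\<^sup>2) \<partial>M) = ennreal (\<integral>\<omega>. (norm (R \<omega>))\<^sup>2 \<partial>M)"
    using square_integrableD(2)[OF R_square_integrable] by (intro nn_integral_eq_integral) auto
  also have "ennreal (\<eta>\<^sup>2 / 4) * ennreal (\<integral>\<omega>. (norm (R \<omega>))\<^sup>2 \<partial>M) + ennreal c
      = ennreal (\<eta>\<^sup>2 / 4 * (\<integral>\<omega>. (norm (R \<omega>))\<^sup>2 \<partial>M) + c)"
  proof -
    have "0 \<le> (\<integral>\<omega>. (norm (R \<omega>))\<^sup>2 \<partial>M)" by (intro integral_nonneg_AE) simp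
    then have "ennreal (\<eta>\<^sup>2 / 4 * (\<integral>\<omega>. (norm (R \<omega>))\<^sup>2 \<partial>M) + c)
        = ennreal (\<eta>\<^sup>2 / 4 * (\<integral>\<omega>. (norm (R \<omega>))\<^sup>2 \<partial>M)) + ennreal c"
      using c_nonneg by (intro ennreal_plus) auto
    moreover have "ennreal (\<eta>\<^sup>2 / 4 * (\<integral>\<omega>. (norm (R \<omega>))\<^sup>2 \<partial>M))
        = ennreal (\<eta>\<^sup>2 / 4) * ennreal (\<integral>\<omega>. (norm (R \<omega>))\<^sup>2 \<partial>M)"
      by (intro ennreal_mult') simp
    ultimately show ?thesis by simp
  qed
  finally show ?thesis
    using c_nonneg by (subst (asm) ennreal_le_iff) (auto intro!: add_nonneg_nonneg integral_nonneg_AE)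
qed

end

section \<open>The stochastic proximal gradient iteration\<close>

lemma Filt_generator_subset: "(\<Union>i<k. {g i -` A \<inter> space M | A. A \<in> sets borel}) \<subseteq> Pow (space M)"
  by auto

lemma space_Filt [simp]: "space (Filt M g k) = space M"
  unfolding Filt_def by (rule space_measure_of[OF Filt_generator_subset])

lemma sets_Filt: "sets (Filt M g k) = sigma_sets (space M) (\<Union>i<k. {g i -` A \<inter> space M | A. A \<in> sets borel})"
  unfolding Filt_def by (rule sets_measure_of[OF Filt_generator_subset])

lemma subalgebra_Filt:
  assumes "\<And>i. g i \<in> borel_measurable M"
  shows "subalgebra M (Filt M g k)"
  unfolding subalgebra_def
proof
  have "(\<Union>i<k. {g i -` A \<inter> space M | A. A \<in> sets borel}) \<subseteq> sets M"
    using assms by (auto simp: measurable_sets)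
  then show "sets (Filt M g k) \<subseteq> sets M"
    unfolding sets_Filt by (rule sets.sigma_sets_subset)
qed simp

lemma sigma_finite_subalgebra_Filt:
  assumes "\<And>i. g i \<in> borel_measurable M" and "prob_space M"
  shows "sigma_finite_subalgebra M (Filt M g k)"
  using assms subalgebra_Filt[of g M k]
  by (intro finite_measure_subalgebra_is_sigma_finite)
    (auto simp: finite_measure_subalgebra_def finite_measure_subalgebra_axioms_def
      intro: prob_space.finite_measure)

lemma measurable_Filt:
  fixes g :: "nat \<Rightarrow> 'w \<Rightarrow> 'a::euclidean_space"
  assumes "i < k"
  shows "g i \<in> borel_measurable (Filt M g k)"
proof (rule measurableI)
  fix A :: "'a set" assume "A \<in> sets borel"
  then show "g i -` A \<inter> space (Filt M g k) \<in> sets (Filt M g k)"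
    unfolding sets_Filt using assms by (auto intro: sigma_sets.Basic)
qed simp

lemma measurable_Filt_mono:
  assumes "k \<le> k'" and "u \<in> borel_measurable (Filt M g k)"
  shows "u \<in> borel_measurable (Filt M g k')"
proof -
  have "sets (Filt M g k) \<subseteq> sets (Filt M g k')"
    unfolding sets_Filt using assms(1) by (intro sigma_sets_subseteq UN_mono) auto
  then show ?thesis using assms(2) unfolding measurable_def by auto
qed

locale stochastic_prox_gradient = prox_gradient h D f gradf L + prob_space M
  for h :: "'a::euclidean_space \<Rightarrow> real" and D f gradf L and M :: "'w measure" +
  fixes g :: "nat \<Rightarrow> 'w \<Rightarrow> 'a" and x0 xstar :: 'a and \<alpha> \<eta> \<iota>0 :: real
    and \<delta> :: "nat \<Rightarrow> real" and \<beta> :: "nat \<Rightarrow> real"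
  assumes g_measurable: "\<And>k. g k \<in> borel_measurable M"
    and g_integrable: "\<And>k. integrable M (g k)"
    and eta_nonneg: "0 \<le> \<eta>" and eta_less_1: "\<eta> < 1"
    and alpha_pos: "0 < \<alpha>" and alpha_L: "\<alpha> * L \<le> 1 - \<eta>"
    and g_unbiased: "unbiased M gradf h D (\<lambda>_. \<alpha>) \<beta> x0 g"
    and g_condC: "condC M gradf h D (\<lambda>_. \<alpha>) \<beta> x0 g (\<lambda>_. \<eta>) \<iota>0 \<delta>"
    and xstar_in_D: "xstar \<in> D"
    and xstar_min: "\<And>x. x \<in> D \<Longrightarrow> f xstar + h xstar \<le> f x + h x"
begin

abbreviation "X k \<equiv> xit h D (\<lambda>_. \<alpha>) \<beta> x0 g k"
abbreviation "Y k \<equiv> yit h D (\<lambda>_. \<alpha>) \<beta> x0 g k"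
abbreviation "Fk k \<equiv> Filt M g k"
abbreviation "\<phi>star \<equiv> f xstar + h xstar"

text \<open>The exact-gradient step; unlike X (Suc k) it is Fk k-measurable.\<close>
definition Xexact :: "nat \<Rightarrow> 'w \<Rightarrow> 'a" where
  "Xexact k \<omega> = prox \<alpha> h D (Y k \<omega> - \<alpha> *\<^sub>R gradf (Y k \<omega>))"

lemma X_0: "X 0 \<omega> = x0" and Y_0: "Y 0 \<omega> = x0"
  unfolding xit_def yit_def by simp_all

lemma X_Suc: "X (Suc k) \<omega> = prox \<alpha> h D (Y k \<omega> - \<alpha> *\<^sub>R g k \<omega>)"
  unfolding xit_def yit_def by (simp add: Let_def)

lemma Y_Suc: "Y (Suc k) \<omega> = X (Suc k) \<omega> + \<beta> (Suc k) *\<^sub>R (X (Suc k) \<omega> - X k \<omega>)"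
  unfolding xit_def yit_def by (simp add: Let_def)

lemma X_Suc_in_D: "X (Suc k) \<omega> \<in> D"
  unfolding X_Suc using alpha_pos by (rule prox_in_domain)

lemma sigma_finite_subalgebra_Fk: "sigma_finite_subalgebra M (Fk k)"
  by (rule sigma_finite_subalgebra_Filt[OF g_measurable prob_space_axioms])

lemma measurable_from_Fk: "u \<in> borel_measurable (Fk k) \<Longrightarrow> u \<in> borel_measurable M"
  by (rule measurable_from_subalg[OF subalgebra_Filt[OF g_measurable]])

lemma XY_adapted: "X k \<in> borel_measurable (Fk k) \<and> Y k \<in> borel_measurable (Fk k)"
proof (induction k)
  case 0
  then show ?case by (simp add: X_0 Y_0)
next
  case (Suc k)
  then have [measurable]: "X k \<in> borel_measurable (Fk (Suc k))" "Y k \<in> borel_measurable (Fk (Suc k))"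
    using measurable_Filt_mono[of k "Suc k"] by auto
  have [measurable]: "g k \<in> borel_measurable (Fk (Suc k))" by (rule measurable_Filt) simp
  have [measurable]: "prox \<alpha> h D \<in> borel_measurable borel" using alpha_pos by (rule prox_borel_measurable)
  have "X (Suc k) \<in> borel_measurable (Fk (Suc k))"
    unfolding X_Suc by measurable
  moreover from this have "Y (Suc k) \<in> borel_measurable (Fk (Suc k))"
    unfolding Y_Suc by measurable
  ultimately show ?case ..
qed

lemma X_adapted [measurable]: "X k \<in> borel_measurable (Fk k)"
  and Y_adapted [measurable]: "Y k \<in> borel_measurable (Fk k)"
  using XY_adapted by auto

lemma X_measurable [measurable]: "X k \<in> borel_measurable M"
  and Y_measurable [measurable]: "Y k \<in> borel_measurable M"
  using measurable_from_Fk[OF X_adapted] measurable_from_Fk[OF Y_adapted] by auto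

lemma Xexact_adapted [measurable]: "Xexact k \<in> borel_measurable (Fk k)"
  using alpha_pos unfolding Xexact_def[abs_def] by measurable

lemma square_integrable_prox_step:
  assumes "square_integrable M Z" and "W \<in> borel_measurable M"
    and "\<And>\<omega>. W \<omega> = prox \<alpha> h D (Z \<omega>)"
  shows "square_integrable M W"
proof (rule square_integrable_affine_bound[OF assms(1,2), of "norm (prox \<alpha> h D 0)" 1])
  fix \<omega>
  show "norm (W \<omega>) \<le> norm (prox \<alpha> h D 0) + 1 * norm (Z \<omega>)"
    using prox_nonexpansive[OF alpha_pos, of "Z \<omega>" 0] norm_triangle_ineq2[of "W \<omega>" "prox \<alpha> h D 0"]
    unfolding assms(3) by simp
qed simp

lemma square_integrable_gradf:
  assumes "square_integrable M Z"
  shows "square_integrable M (\<lambda>\<omega>. gradf (Z \<omega>))"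
proof (rule square_integrable_affine_bound[OF assms, of _ "norm (gradf 0)" L])
  show "(\<lambda>\<omega>. gradf (Z \<omega>)) \<in> borel_measurable M"
    using square_integrableD(1)[OF assms] by measurable
  fix \<omega>
  show "norm (gradf (Z \<omega>)) \<le> norm (gradf 0) + L * norm (Z \<omega>)"
    using grad_lip[of "Z \<omega>" 0] norm_triangle_ineq2[of "gradf (Z \<omega>)" "gradf 0"] by simp
qed (rule L_nonneg)

lemma square_integrable_Xexact:
  assumes "square_integrable M (Y k)"
  shows "square_integrable M (Xexact k)"
  by (rule square_integrable_prox_step[OF square_integrable_diff[OF assms
        square_integrable_scaleR[OF square_integrable_gradf[OF assms]]]
        measurable_from_Fk[OF Xexact_adapted]])
    (simp add: Xexact_def)

lemma self_bounded_error_step: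
  assumes "square_integrable M (Y k)"
  shows "self_bounded_error M (Fk k) (\<lambda>\<omega>. g k \<omega> - gradf (Y k \<omega>)) (Rit h D (\<lambda>_. \<alpha>) \<beta> x0 g k)
    (\<lambda>\<omega>. (1 / \<alpha>) *\<^sub>R (Y k \<omega> - Xexact k \<omega>)) \<eta> (\<iota>0\<^sup>2 * (\<delta> k)\<^sup>2)"
proof -
  interpret sigma_finite_subalgebra M "Fk k" by (rule sigma_finite_subalgebra_Fk)
  have [measurable]: "g k \<in> borel_measurable M" by (rule g_measurable)
  have R_eq: "Rit h D (\<lambda>_. \<alpha>) \<beta> x0 g k \<omega> = (1 / \<alpha>) *\<^sub>R (Y k \<omega> - X (Suc k) \<omega>)" for \<omega>
    unfolding Rit_def by simp
  have near: "norm (Rit h D (\<lambda>_. \<alpha>) \<beta> x0 g k \<omega> - (1 / \<alpha>) *\<^sub>R (Y k \<omega> - Xexact k \<omega>))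
      \<le> norm (g k \<omega> - gradf (Y k \<omega>))" for \<omega>
  proof -
    have "\<alpha> * norm (Rit h D (\<lambda>_. \<alpha>) \<beta> x0 g k \<omega> - (1 / \<alpha>) *\<^sub>R (Y k \<omega> - Xexact k \<omega>))
        = norm (X (Suc k) \<omega> - Xexact k \<omega>)"
      using alpha_pos unfolding R_eq by (simp add: norm_minus_commute flip: scaleR_diff_right)
    also have "\<dots> \<le> norm ((Y k \<omega> - \<alpha> *\<^sub>R g k \<omega>) - (Y k \<omega> - \<alpha> *\<^sub>R gradf (Y k \<omega>)))"
      unfolding X_Suc Xexact_def using alpha_pos by (rule prox_nonexpansive)
    also have "\<dots> = \<alpha> * norm (g k \<omega> - gradf (Y k \<omega>))"
      using alpha_pos by (simp add: norm_minus_commute flip: scaleR_diff_right)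
    finally show ?thesis using alpha_pos by simp
  qed
  show ?thesis
  proof unfold_locales
    show "integrable M (\<lambda>\<omega>. g k \<omega> - gradf (Y k \<omega>))"
      using g_integrable square_integrable_integrable[OF square_integrable_gradf[OF assms]] by simp
    show "Rit h D (\<lambda>_. \<alpha>) \<beta> x0 g k \<in> borel_measurable M"
      unfolding R_eq[abs_def] by measurable
    show "(\<lambda>\<omega>. (1 / \<alpha>) *\<^sub>R (Y k \<omega> - Xexact k \<omega>)) \<in> borel_measurable (Fk k)" by measurable
    show "square_integrable M (\<lambda>\<omega>. (1 / \<alpha>) *\<^sub>R (Y k \<omega> - Xexact k \<omega>))"
      by (intro square_integrable_scaleR square_integrable_diff assms square_integrable_Xexact)
    show "\<eta>\<^sup>2 \<le> 1" using eta_nonneg eta_less_1 by (simp add: power_le_one)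
    show "AE \<omega> in M. nn_cond_exp M (Fk k) (\<lambda>\<omega>. ennreal ((norm (g k \<omega> - gradf (Y k \<omega>)))\<^sup>2)) \<omega>
      \<le> ennreal (\<eta>\<^sup>2 / 4 * (\<Sum>i\<in>Basis. (real_cond_exp M (Fk k) (\<lambda>\<omega>. Rit h D (\<lambda>_. \<alpha>) \<beta> x0 g k \<omega> \<bullet> i) \<omega>)\<^sup>2)
        + \<iota>0\<^sup>2 * (\<delta> k)\<^sup>2)"
      using g_condC unfolding condC_def by blast
  qed (use near in auto)
qed

lemma square_integrable_iterates: "square_integrable M (X k) \<and> square_integrable M (Y k)"
proof (induction k)
  case 0
  then show ?case by (simp add: X_0 Y_0 square_integrable_const)
next
  case (Suc k)
  then have "square_integrable M (Y k)" by simp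
  then interpret gradient_error: self_bounded_error M "Fk k" "\<lambda>\<omega>. g k \<omega> - gradf (Y k \<omega>)" "Rit h D (\<lambda>_. \<alpha>) \<beta> x0 g k"
    "\<lambda>\<omega>. (1 / \<alpha>) *\<^sub>R (Y k \<omega> - Xexact k \<omega>)" \<eta> "\<iota>0\<^sup>2 * (\<delta> k)\<^sup>2"
    by (rule self_bounded_error_step)
  have "square_integrable M (g k)"
    using square_integrable_add[OF gradient_error.e_square_integrable square_integrable_gradf[OF \<open>square_integrable M (Y k)\<close>]]
    by simp
  then have "square_integrable M (\<lambda>\<omega>. Y k \<omega> - \<alpha> *\<^sub>R g k \<omega>)"
    by (intro square_integrable_diff square_integrable_scaleR \<open>square_integrable M (Y k)\<close>)
  then have X: "square_integrable M (X (Suc k))"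
    by (rule square_integrable_prox_step[OF _ X_measurable]) (simp add: X_Suc)
  then have "square_integrable M (Y (Suc k))"
    unfolding Y_Suc[abs_def] using Suc.IH
    by (intro square_integrable_add square_integrable_scaleR square_integrable_diff) auto
  with X show ?case ..
qed

lemma X_square_integrable: "square_integrable M (X k)"
  and Y_square_integrable: "square_integrable M (Y k)"
  using square_integrable_iterates by auto

sublocale gradient_error: self_bounded_error M "Fk k" "\<lambda>\<omega>. g k \<omega> - gradf (Y k \<omega>)" "Rit h D (\<lambda>_. \<alpha>) \<beta> x0 g k"
  "\<lambda>\<omega>. (1 / \<alpha>) *\<^sub>R (Y k \<omega> - Xexact k \<omega>)" \<eta> "\<iota>0\<^sup>2 * (\<delta> k)\<^sup>2" for k
  by (rule self_bounded_error_step[OF Y_square_integrable])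


lemma g_square_integrable: "square_integrable M (g k)"
  using square_integrable_add[OF gradient_error.e_square_integrable[of k] square_integrable_gradf[OF Y_square_integrable[of k]]]
  by simp

lemma integral_error_inner_adapted_eq_0:
  assumes "W \<in> borel_measurable (Fk k)" and "square_integrable M W"
  shows "(\<integral>\<omega>. (g k \<omega> - gradf (Y k \<omega>)) \<bullet> W \<omega> \<partial>M) = 0"
  using g_unbiased assms unfolding unbiased_def
  by (intro gradient_error.integral_inner_diff_cond_exp_eq_0 finite_measure_axioms g_square_integrable
      square_integrable_gradf Y_square_integrable) auto

lemma objective_X_Suc_ge: "\<phi>star \<le> f (X (Suc k) \<omega>) + h (X (Suc k) \<omega>)"
  by (rule xstar_min[OF X_Suc_in_D])

lemma integrable_objective_X_Suc: "integrable M (\<lambda>\<omega>. f (X (Suc k) \<omega>) + h (X (Suc k) \<omega>))"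
proof -
  define e where "e \<omega> = g k \<omega> - gradf (Y k \<omega>)" for \<omega>
  define B where "B \<omega> = \<bar>\<phi>star\<bar> + (norm (Y k \<omega> - xstar))\<^sup>2 / (2 * \<alpha>) + \<alpha> * (norm (e \<omega>))\<^sup>2
      + \<bar>e \<omega> \<bullet> (Xexact k \<omega> - xstar)\<bar>" for \<omega>
  have "square_integrable M e" unfolding e_def by (rule gradient_error.e_square_integrable)
  moreover have "square_integrable M (\<lambda>\<omega>. Y k \<omega> - xstar)"
    by (intro square_integrable_diff Y_square_integrable square_integrable_const)
  moreover have "square_integrable M (\<lambda>\<omega>. Xexact k \<omega> - xstar)"
    by (intro square_integrable_diff square_integrable_Xexact Y_square_integrable square_integrable_const)
  ultimately have parts: "integrable M (\<lambda>\<omega>. (norm (Y k \<omega> - xstar))\<^sup>2)" "integrable M (\<lambda>\<omega>. (norm (e \<omega>))\<^sup>2)"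
    "integrable M (\<lambda>\<omega>. e \<omega> \<bullet> (Xexact k \<omega> - xstar))"
    by (auto dest: square_integrableD(2) intro: integrable_inner_square_integrable)
  have bound: "norm (f (X (Suc k) \<omega>) + h (X (Suc k) \<omega>)) \<le> norm (B \<omega>)" for \<omega>
  proof -
    have upper: "f (X (Suc k) \<omega>) + h (X (Suc k) \<omega>) \<le> B \<omega>"
      using prox_gradient_step_inequality[OF alpha_pos xstar_in_D, of "Y k \<omega>" "g k \<omega>"]
        alpha_pos alpha_L eta_nonneg
      unfolding B_def e_def X_Suc[symmetric] Xexact_def[symmetric]
      by (smt (verit) divide_nonneg_nonneg divide_right_mono mult_nonneg_nonneg zero_le_power2
          mult.commute)
    have "\<bar>\<phi>star\<bar> \<le> B \<omega>" unfolding B_def using alpha_pos by simp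
    with upper objective_X_Suc_ge[of k \<omega>] abs_ge_minus_self[of \<phi>star] show ?thesis
      by (auto simp: abs_le_iff)
  qed
  have "integrable M B" unfolding B_def using parts by simp
  moreover have "(\<lambda>\<omega>. f (X (Suc k) \<omega>) + h (X (Suc k) \<omega>)) \<in> borel_measurable M"
    using borel_measurable_comp_h[OF X_measurable X_Suc_in_D] by measurable
  ultimately show ?thesis
    by (rule Bochner_Integration.integrable_bound) (intro AE_I2 bound)
qed

lemma integral_objective_X_Suc_ge: "\<phi>star \<le> (\<integral>\<omega>. f (X (Suc k) \<omega>) + h (X (Suc k) \<omega>) \<partial>M)"
  using integral_mono[OF integrable_const integrable_objective_X_Suc objective_X_Suc_ge]
  by (simp add: prob_space)

text \<open>The cross term vanishes by unbiasedness because Xexact k - U is Fk k-measurable, and by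
  Condition C the squared gradient error is absorbed by the descent term, as
  eta^2/4 \<le> (1 - L alpha)/2.\<close>
lemma expected_step_inequality:
  assumes U_adapted: "U \<in> borel_measurable (Fk k)" and U_sq: "square_integrable M U"
    and U_in_D: "\<And>\<omega>. U \<omega> \<in> D"
    and \<Phi>_integrable: "integrable M \<Phi>" and \<Phi>_ge: "\<And>\<omega>. f (U \<omega>) + h (U \<omega>) \<le> \<Phi> \<omega>"
  shows "(\<integral>\<omega>. f (X (Suc k) \<omega>) + h (X (Suc k) \<omega>) \<partial>M)
    \<le> (\<integral>\<omega>. \<Phi> \<omega> \<partial>M) + ((\<integral>\<omega>. (norm (Y k \<omega> - U \<omega>))\<^sup>2 \<partial>M)
        - (\<integral>\<omega>. (norm (X (Suc k) \<omega> - U \<omega>))\<^sup>2 \<partial>M)) / (2 * \<alpha>) + \<alpha> * (\<iota>0\<^sup>2 * (\<delta> k)\<^sup>2)"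
proof -
  define \<kappa> where "\<kappa> = (1 - L * \<alpha>) / (2 * \<alpha>)"
  define c where "c = \<iota>0\<^sup>2 * (\<delta> k)\<^sup>2"
  define A2 where "A2 \<omega> = (norm (Y k \<omega> - U \<omega>))\<^sup>2" for \<omega>
  define A3 where "A3 \<omega> = (norm (X (Suc k) \<omega> - U \<omega>))\<^sup>2" for \<omega>
  define A4 where "A4 \<omega> = (norm (Y k \<omega> - X (Suc k) \<omega>))\<^sup>2" for \<omega>
  define A5 where "A5 \<omega> = (norm (g k \<omega> - gradf (Y k \<omega>)))\<^sup>2" for \<omega>
  define A6 where "A6 \<omega> = (g k \<omega> - gradf (Y k \<omega>)) \<bullet> (Xexact k \<omega> - U \<omega>)" for \<omega>
  have W_sq: "square_integrable M (\<lambda>\<omega>. Xexact k \<omega> - U \<omega>)"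
    by (intro square_integrable_diff square_integrable_Xexact Y_square_integrable U_sq)
  have int: "integrable M A2" "integrable M A3" "integrable M A4" "integrable M A5" "integrable M A6"
    unfolding A2_def A3_def A4_def A5_def A6_def
    by (intro square_integrableD(2) square_integrable_diff integrable_inner_square_integrable
        Y_square_integrable X_square_integrable U_sq gradient_error.e_square_integrable W_sq)+
  have A6_0: "(\<integral>\<omega>. A6 \<omega> \<partial>M) = 0"
    unfolding A6_def using U_adapted W_sq by (intro integral_error_inner_adapted_eq_0) auto
  have "(\<integral>\<omega>. f (X (Suc k) \<omega>) + h (X (Suc k) \<omega>) \<partial>M)
      \<le> (\<integral>\<omega>. \<Phi> \<omega> + (A2 \<omega> - A3 \<omega>) / (2 * \<alpha>) - \<kappa> * A4 \<omega> + \<alpha> * A5 \<omega> - A6 \<omega> \<partial>M)"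
  proof (rule integral_mono[OF integrable_objective_X_Suc])
    show "integrable M (\<lambda>\<omega>. \<Phi> \<omega> + (A2 \<omega> - A3 \<omega>) / (2 * \<alpha>) - \<kappa> * A4 \<omega> + \<alpha> * A5 \<omega> - A6 \<omega>)"
      using \<Phi>_integrable int by auto
    fix \<omega>
    show "f (X (Suc k) \<omega>) + h (X (Suc k) \<omega>) \<le> \<Phi> \<omega> + (A2 \<omega> - A3 \<omega>) / (2 * \<alpha>) - \<kappa> * A4 \<omega> + \<alpha> * A5 \<omega> - A6 \<omega>"
      using prox_gradient_step_inequality[OF alpha_pos U_in_D[of \<omega>], of "Y k \<omega>" "g k \<omega>"] \<Phi>_ge[of \<omega>]
      unfolding A2_def A3_def A4_def A5_def A6_def \<kappa>_def X_Suc[symmetric] Xexact_def[symmetric]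
      by linarith
  qed
  also have "\<dots> = (\<integral>\<omega>. \<Phi> \<omega> \<partial>M) + ((\<integral>\<omega>. A2 \<omega> \<partial>M) - (\<integral>\<omega>. A3 \<omega> \<partial>M)) / (2 * \<alpha>)
      - \<kappa> * (\<integral>\<omega>. A4 \<omega> \<partial>M) + \<alpha> * (\<integral>\<omega>. A5 \<omega> \<partial>M)"
    using \<Phi>_integrable int A6_0 by (simp add: diff_divide_distrib)
  also have "\<alpha> * (\<integral>\<omega>. A5 \<omega> \<partial>M) \<le> \<kappa> * (\<integral>\<omega>. A4 \<omega> \<partial>M) + \<alpha> * c"
  proof -
    have "(norm (Rit h D (\<lambda>_. \<alpha>) \<beta> x0 g k \<omega>))\<^sup>2 = A4 \<omega> / \<alpha>\<^sup>2" for \<omega>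
      unfolding Rit_def A4_def using alpha_pos by (simp add: power_divide power_mult_distrib)
    then have "(\<integral>\<omega>. A5 \<omega> \<partial>M) \<le> \<eta>\<^sup>2 / 4 * ((\<integral>\<omega>. A4 \<omega> \<partial>M) / \<alpha>\<^sup>2) + c"
      using gradient_error.expected_error_le[of k] unfolding A5_def c_def by simp
    then have "\<alpha> * (\<integral>\<omega>. A5 \<omega> \<partial>M) \<le> \<eta>\<^sup>2 / (4 * \<alpha>) * (\<integral>\<omega>. A4 \<omega> \<partial>M) + \<alpha> * c"
      using alpha_pos by (simp add: field_simps power2_eq_square)
    moreover have "\<eta>\<^sup>2 / (4 * \<alpha>) \<le> \<kappa>"
    proof -
      have "\<eta>\<^sup>2 \<le> 2 * (1 - L * \<alpha>)"
        using eta_nonneg eta_less_1 alpha_L by (simp add: power2_eq_square mult.commute) (smt (verit) mult_left_le)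
      then show ?thesis unfolding \<kappa>_def using alpha_pos by (simp add: field_simps)
    qed
    moreover have "0 \<le> (\<integral>\<omega>. A4 \<omega> \<partial>M)" unfolding A4_def by (rule integral_nonneg_AE) simp
    ultimately show ?thesis by (smt (verit) mult_right_mono)
  qed
  finally show ?thesis unfolding A2_def A3_def c_def by simp
qed

definition gap :: "nat \<Rightarrow> real" where
  "gap k = (\<integral>\<omega>. f (X k \<omega>) + h (X k \<omega>) \<partial>M) - \<phi>star"

lemma gap_Suc_nonneg: "0 \<le> gap (Suc k)"
  unfolding gap_def using integral_objective_X_Suc_ge[of k] by simp

lemma nn_integral_gap_Suc:
  "(\<integral>\<^sup>+\<omega>. ennreal (f (X (Suc k) \<omega>) + h (X (Suc k) \<omega>) - \<phi>star) \<partial>M) = ennreal (gap (Suc k))"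
  using integrable_objective_X_Suc[of k] objective_X_Suc_ge[of k] unfolding gap_def
  by (subst nn_integral_eq_integral) (auto simp: prob_space)

end

section \<open>Option I: rate O(1/K) for the best iterate\<close>

lemma exists_le_average:
  fixes w :: "nat \<Rightarrow> real"
  assumes "0 < K" and "(\<Sum>k<K. w k) \<le> C"
  shows "\<exists>j<K. w j \<le> C / real K"
proof -
  obtain j where j: "j < K" "w j = Min (w ` {..<K})"
    using Min_in[of "w ` {..<K}"] \<open>0 < K\<close> by fastforce
  then have "(\<Sum>k<K. w j) \<le> (\<Sum>k<K. w k)" by (intro sum_mono) simp
  with assms j show ?thesis by (auto simp: field_simps)
qed

context stochastic_prox_gradient
begin

lemma option_I_gap_sum:
  assumes "\<And>k. \<beta> k = 0"
  shows "(\<Sum>k<K. gap (Suc k)) + (\<integral>\<omega>. (norm (X K \<omega> - xstar))\<^sup>2 \<partial>M) / (2 * \<alpha>)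
    \<le> (norm (x0 - xstar))\<^sup>2 / (2 * \<alpha>) + \<alpha> * \<iota>0\<^sup>2 * (\<Sum>k<K. (\<delta> k)\<^sup>2)"
proof (induction K)
  case 0
  then show ?case by (simp add: X_0 prob_space)
next
  case (Suc K)
  have "Y K = X K" using assms by (cases K) (auto simp: X_0 Y_0 Y_Suc)
  then have "gap (Suc K) \<le> ((\<integral>\<omega>. (norm (X K \<omega> - xstar))\<^sup>2 \<partial>M)
      - (\<integral>\<omega>. (norm (X (Suc K) \<omega> - xstar))\<^sup>2 \<partial>M)) / (2 * \<alpha>) + \<alpha> * (\<iota>0\<^sup>2 * (\<delta> K)\<^sup>2)"
    using expected_step_inequality[of "\<lambda>_. xstar" K "\<lambda>_. \<phi>star"]
    by (simp add: gap_def prob_space square_integrable_const xstar_in_D)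
  with Suc.IH show ?case by (simp add: diff_divide_distrib algebra_simps)
qed

lemma option_I_rate:
  assumes "\<And>k. \<beta> k = 0" and "summable (\<lambda>k. (\<delta> k)\<^sup>2)"
  shows "\<exists>C. \<forall>K\<ge>1. Min ((\<lambda>k. \<integral>\<^sup>+\<omega>. ennreal (f (X k \<omega>) + h (X k \<omega>) - \<phi>star) \<partial>M) ` {..<K})
    \<le> ennreal (C / real K)"
proof (intro exI allI impI)
  \<comment> \<open>x0 need not lie in D, so its gap may be negative; ennreal truncates it at 0\<close>
  define w where "w k = (if k = 0 then max 0 (f x0 + h x0 - \<phi>star) else gap k)" for k
  define C where "C = \<bar>f x0 + h x0 - \<phi>star\<bar> + (norm (x0 - xstar))\<^sup>2 / (2 * \<alpha>)
    + \<alpha> * \<iota>0\<^sup>2 * (\<Sum>k. (\<delta> k)\<^sup>2)"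
  fix K :: nat assume "1 \<le> K"
  have v_eq: "(\<integral>\<^sup>+\<omega>. ennreal (f (X k \<omega>) + h (X k \<omega>) - \<phi>star) \<partial>M) = ennreal (w k)" for k
    by (cases k) (auto simp: w_def X_0 emeasure_space_1 nn_integral_gap_Suc ennreal_max_0)
  have "(\<Sum>k<K. w k) \<le> C"
  proof -
    obtain n where K: "K = Suc n" using \<open>1 \<le> K\<close> by (cases K) auto
    have "0 \<le> (\<integral>\<omega>. (norm (X n \<omega> - xstar))\<^sup>2 \<partial>M) / (2 * \<alpha>)"
      using alpha_pos by (simp add: integral_nonneg_AE)
    then have "(\<Sum>k<n. gap (Suc k)) \<le> (norm (x0 - xstar))\<^sup>2 / (2 * \<alpha>) + \<alpha> * \<iota>0\<^sup>2 * (\<Sum>k<n. (\<delta> k)\<^sup>2)"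
      using option_I_gap_sum[OF assms(1), of n] by linarith
    moreover have "\<alpha> * \<iota>0\<^sup>2 * (\<Sum>k<n. (\<delta> k)\<^sup>2) \<le> \<alpha> * \<iota>0\<^sup>2 * (\<Sum>k. (\<delta> k)\<^sup>2)"
      using assms(2) alpha_pos by (intro mult_left_mono sum_le_suminf) auto
    moreover have "(\<Sum>k<K. w k) = max 0 (f x0 + h x0 - \<phi>star) + (\<Sum>k<n. gap (Suc k))"
      unfolding K sum.lessThan_Suc_shift by (simp add: w_def)
    ultimately show ?thesis unfolding C_def by linarith
  qed
  then obtain j where "j < K" "w j \<le> C / real K"
    using exists_le_average[of K w C] \<open>1 \<le> K\<close> by auto
  have "Min ((\<lambda>k. ennreal (w k)) ` {..<K}) \<le> ennreal (w j)"
    using \<open>j < K\<close> by (intro Min_le) auto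
  also have "\<dots> \<le> ennreal (C / real K)" using \<open>w j \<le> C / real K\<close> by (rule ennreal_leI)
  finally show "Min ((\<lambda>k. \<integral>\<^sup>+\<omega>. ennreal (f (X k \<omega>) + h (X k \<omega>) - \<phi>star) \<partial>M) ` {..<K})
    \<le> ennreal (C / real K)"
    unfolding v_eq .
qed

end

section \<open>Option II: rate O(1/K^2) with acceleration\<close>

lemma theta_acc_pos: "0 < theta_acc k"
  unfolding theta_acc_def by simp

lemma theta_acc_1: "theta_acc (Suc 0) = 1"
  unfolding theta_acc_def by simp

lemma theta_acc_Suc_le_1: "theta_acc (Suc k) \<le> 1"
  unfolding theta_acc_def by simp

text \<open>The momentum beta_acc is chosen exactly so that this holds.\<close>
lemma theta_acc_plus_beta_acc:
  "theta_acc (Suc (Suc j)) + beta_acc (Suc j) = theta_acc (Suc (Suc j)) / theta_acc (Suc j)"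
proof -
  have "theta_acc (Suc (Suc j)) + beta_acc (Suc j) = (real j + 2) / (real j + 3)"
    unfolding theta_acc_def beta_acc_def by (simp add: divide_simps) (simp add: algebra_simps)
  moreover have "theta_acc (Suc (Suc j)) / theta_acc (Suc j) = (real j + 2) / (real j + 3)"
    unfolding theta_acc_def by (simp add: divide_simps) (simp add: algebra_simps)
  ultimately show ?thesis by simp
qed

lemma theta_acc_weight: "(1 - theta_acc (Suc k)) / (theta_acc (Suc k))\<^sup>2 = real k * (real k + 2) / 4"
  unfolding theta_acc_def by (simp add: divide_simps power2_eq_square)

lemma theta_acc_weight_le:
  "(1 - theta_acc (Suc (Suc j))) / (theta_acc (Suc (Suc j)))\<^sup>2 \<le> 1 / (theta_acc (Suc j))\<^sup>2"
proof -
  have "1 / (theta_acc (Suc j))\<^sup>2 = (real j + 2)\<^sup>2 / 4"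
    unfolding theta_acc_def by (simp add: divide_simps power2_eq_square) (simp add: algebra_simps)
  then show ?thesis unfolding theta_acc_weight by (simp add: power2_eq_square algebra_simps)
qed

context stochastic_prox_gradient
begin

text \<open>v_k of the paper; for k = 0 the truncated subtraction k - 1 = 0 yields v_0 = x_0.\<close>
definition V :: "nat \<Rightarrow> 'w \<Rightarrow> 'a" where
  "V k \<omega> = X (k - 1) \<omega> + (1 / theta_acc k) *\<^sub>R (X k \<omega> - X (k - 1) \<omega>)"

definition U :: "nat \<Rightarrow> 'w \<Rightarrow> 'a" where
  "U k \<omega> = (1 - theta_acc (Suc k)) *\<^sub>R X k \<omega> + theta_acc (Suc k) *\<^sub>R xstar"

text \<open>For k = 0 the weight 1 - theta_acc 1 vanishes, so the value of h at x0, which need not lie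
  in D, plays no role (likewise for gap 0 in the energy below).\<close>
definition \<Phi> :: "nat \<Rightarrow> 'w \<Rightarrow> real" where
  "\<Phi> k \<omega> = (1 - theta_acc (Suc k)) * (f (X k \<omega>) + h (X k \<omega>)) + theta_acc (Suc k) * \<phi>star"

lemma X_Suc_minus_U: "X (Suc k) \<omega> - U k \<omega> = theta_acc (Suc k) *\<^sub>R (V (Suc k) \<omega> - xstar)"
  using theta_acc_pos[of "Suc k"] unfolding U_def V_def by (simp add: algebra_simps)

lemma Y_minus_U:
  assumes "\<beta> = beta_acc"
  shows "Y k \<omega> - U k \<omega> = theta_acc (Suc k) *\<^sub>R (V k \<omega> - xstar)"
proof (cases k)
  case 0
  then show ?thesis unfolding U_def V_def by (simp add: theta_acc_1 X_0 Y_0)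
next
  case (Suc j)
  define t where "t = theta_acc (Suc (Suc j))"
  have "Y k \<omega> - U k \<omega> = t *\<^sub>R (X j \<omega> - xstar) + (t + \<beta> (Suc j)) *\<^sub>R (X k \<omega> - X j \<omega>)"
    unfolding Suc U_def Y_Suc t_def by (simp add: algebra_simps)
  also have "t + \<beta> (Suc j) = t / theta_acc (Suc j)"
    using theta_acc_plus_beta_acc[of j] unfolding assms t_def .
  also have "t *\<^sub>R (X j \<omega> - xstar) + (t / theta_acc (Suc j)) *\<^sub>R (X k \<omega> - X j \<omega>) = t *\<^sub>R (V k \<omega> - xstar)"
    unfolding V_def Suc by (simp add: algebra_simps)
  finally show ?thesis unfolding t_def Suc .
qed

lemma U_adapted: "U k \<in> borel_measurable (Fk k)"
  unfolding U_def[abs_def] by measurable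

lemma U_square_integrable: "square_integrable M (U k)"
  unfolding U_def[abs_def]
  by (intro square_integrable_add square_integrable_scaleR X_square_integrable square_integrable_const)

lemma U_in_D: "U k \<omega> \<in> D"
proof (cases k)
  case 0
  then show ?thesis unfolding U_def by (simp add: theta_acc_1 xstar_in_D)
next
  case (Suc j)
  then show ?thesis
    using D_convex X_Suc_in_D[of j \<omega>] xstar_in_D theta_acc_pos[of "Suc k"] theta_acc_Suc_le_1[of k]
    unfolding U_def by (simp add: convex_alt)
qed

lemma objective_U_le_\<Phi>: "f (U k \<omega>) + h (U k \<omega>) \<le> \<Phi> k \<omega>"
proof (cases k)
  case 0
  then show ?thesis unfolding U_def \<Phi>_def by (simp add: theta_acc_1)
next
  case (Suc j)
  have t: "0 \<le> theta_acc (Suc k)" "theta_acc (Suc k) \<le> 1"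
    using theta_acc_pos[of "Suc k"] theta_acc_Suc_le_1[of k] by auto
  have "f (U k \<omega>) \<le> (1 - theta_acc (Suc k)) * f (X k \<omega>) + theta_acc (Suc k) * f xstar"
    unfolding U_def using convex_onD[OF f_convex, of "theta_acc (Suc k)" "X k \<omega>" xstar] t by simp
  moreover have "h (U k \<omega>) \<le> (1 - theta_acc (Suc k)) * h (X k \<omega>) + theta_acc (Suc k) * h xstar"
    using convex_onD[OF h_convex t X_Suc_in_D[of j \<omega>] xstar_in_D] unfolding U_def Suc by simp
  ultimately show ?thesis unfolding \<Phi>_def by (simp add: algebra_simps)
qed

lemma integrable_\<Phi>: "integrable M (\<Phi> k)"
  by (cases k) (simp_all add: \<Phi>_def[abs_def] theta_acc_1 integrable_objective_X_Suc)

lemma integral_\<Phi>: "(\<integral>\<omega>. \<Phi> k \<omega> \<partial>M) = (1 - theta_acc (Suc k)) * gap k + \<phi>star"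
proof (cases k)
  case 0
  then show ?thesis by (simp add: \<Phi>_def theta_acc_1 prob_space)
next
  case (Suc j)
  then have "(\<integral>\<omega>. \<Phi> k \<omega> \<partial>M) = (1 - theta_acc (Suc k)) * (\<integral>\<omega>. f (X k \<omega>) + h (X k \<omega>) \<partial>M)
      + theta_acc (Suc k) * \<phi>star"
    unfolding \<Phi>_def using integrable_objective_X_Suc[of j] by (simp add: prob_space)
  then show ?thesis by (simp add: gap_def algebra_simps)
qed

definition energy :: "nat \<Rightarrow> real" where
  "energy k = (1 - theta_acc (Suc k)) / (theta_acc (Suc k))\<^sup>2 * gap k
    + (\<integral>\<omega>. (norm (V k \<omega> - xstar))\<^sup>2 \<partial>M) / (2 * \<alpha>)"

lemma energy_Suc_le:
  assumes "\<beta> = beta_acc"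
  shows "energy (Suc k) \<le> energy k + \<alpha> * \<iota>0\<^sup>2 * ((\<delta> k)\<^sup>2 / (theta_acc (Suc k))\<^sup>2)"
proof -
  define t where "t = theta_acc (Suc k)"
  have "0 < t" unfolding t_def by (rule theta_acc_pos)
  define v where "v j = (\<integral>\<omega>. (norm (V j \<omega> - xstar))\<^sup>2 \<partial>M)" for j
  have step: "(\<integral>\<omega>. f (X (Suc k) \<omega>) + h (X (Suc k) \<omega>) \<partial>M) \<le> (\<integral>\<omega>. \<Phi> k \<omega> \<partial>M)
      + ((\<integral>\<omega>. (norm (Y k \<omega> - U k \<omega>))\<^sup>2 \<partial>M) - (\<integral>\<omega>. (norm (X (Suc k) \<omega> - U k \<omega>))\<^sup>2 \<partial>M)) / (2 * \<alpha>)
      + \<alpha> * (\<iota>0\<^sup>2 * (\<delta> k)\<^sup>2)"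
    by (rule expected_step_inequality[OF U_adapted U_square_integrable U_in_D integrable_\<Phi> objective_U_le_\<Phi>])
  have Y_dist: "(\<integral>\<omega>. (norm (Y k \<omega> - U k \<omega>))\<^sup>2 \<partial>M) = t\<^sup>2 * v k"
    unfolding Y_minus_U[OF assms] v_def t_def by (simp add: power_mult_distrib)
  have X_dist: "(\<integral>\<omega>. (norm (X (Suc k) \<omega> - U k \<omega>))\<^sup>2 \<partial>M) = t\<^sup>2 * v (Suc k)"
    unfolding X_Suc_minus_U v_def t_def by (simp add: power_mult_distrib)
  have "gap (Suc k) \<le> (1 - t) * gap k + (t\<^sup>2 * v k - t\<^sup>2 * v (Suc k)) / (2 * \<alpha>)
      + \<alpha> * (\<iota>0\<^sup>2 * (\<delta> k)\<^sup>2)"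
    using step unfolding Y_dist X_dist integral_\<Phi> gap_def[of "Suc k"] t_def by linarith
  then have "gap (Suc k) / t\<^sup>2 \<le> (1 - t) / t\<^sup>2 * gap k + (v k - v (Suc k)) / (2 * \<alpha>)
      + \<alpha> * \<iota>0\<^sup>2 * ((\<delta> k)\<^sup>2 / t\<^sup>2)"
    using \<open>0 < t\<close> by (simp add: field_simps)
  moreover have "(1 - theta_acc (Suc (Suc k))) / (theta_acc (Suc (Suc k)))\<^sup>2 * gap (Suc k) \<le> gap (Suc k) / t\<^sup>2"
    using mult_right_mono[OF theta_acc_weight_le gap_Suc_nonneg] unfolding t_def by simp
  ultimately show ?thesis
    unfolding energy_def v_def[symmetric] t_def[symmetric] by (simp add: diff_divide_distrib)
qed

lemma option_II_rate:
  assumes "\<beta> = beta_acc" and "summable (\<lambda>k. (\<delta> k)\<^sup>2 / (theta_acc (Suc k))\<^sup>2)"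
  shows "\<exists>C. \<forall>K\<ge>1. (\<integral>\<^sup>+\<omega>. ennreal (f (X K \<omega>) + h (X K \<omega>) - \<phi>star) \<partial>M) \<le> ennreal (C / (real K)\<^sup>2)"
proof (intro exI allI impI)
  define q where "q k = (\<delta> k)\<^sup>2 / (theta_acc (Suc k))\<^sup>2" for k
  define S where "S = (norm (x0 - xstar))\<^sup>2 / (2 * \<alpha>) + \<alpha> * \<iota>0\<^sup>2 * (\<Sum>k. q k)"
  have energy_le: "energy K \<le> energy 0 + \<alpha> * \<iota>0\<^sup>2 * (\<Sum>k<K. q k)" for K
  proof (induction K)
    case (Suc K)
    then show ?case using energy_Suc_le[OF assms(1), of K] by (simp add: q_def algebra_simps)
  qed simp
  have energy_0: "energy 0 = (norm (x0 - xstar))\<^sup>2 / (2 * \<alpha>)"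
    by (simp add: energy_def V_def theta_acc_1 X_0 prob_space)
  have tail_le: "\<alpha> * \<iota>0\<^sup>2 * (\<Sum>k<K. q k) \<le> \<alpha> * \<iota>0\<^sup>2 * (\<Sum>k. q k)" for K
    using assms(2) alpha_pos unfolding q_def by (intro mult_left_mono sum_le_suminf) auto
  have energy_bound: "energy K \<le> S" for K
    using energy_le[of K] energy_0 tail_le[of K] unfolding S_def by linarith
  fix K :: nat assume "1 \<le> K"
  have "0 \<le> (\<integral>\<omega>. (norm (V K \<omega> - xstar))\<^sup>2 \<partial>M) / (2 * \<alpha>)"
    using alpha_pos by (simp add: integral_nonneg_AE)
  then have "real K * (real K + 2) / 4 * gap K \<le> S"
    using energy_bound[of K] unfolding energy_def theta_acc_weight by linarith
  moreover have "(real K)\<^sup>2 * gap K \<le> real K * (real K + 2) * gap K"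
    using gap_Suc_nonneg[of "K - 1"] \<open>1 \<le> K\<close> by (intro mult_right_mono) (auto simp: power2_eq_square)
  ultimately have "gap K \<le> 4 * S / (real K)\<^sup>2"
    using \<open>1 \<le> K\<close> by (simp add: field_simps)
  moreover obtain j where "K = Suc j" using \<open>1 \<le> K\<close> by (cases K) auto
  ultimately show "(\<integral>\<^sup>+\<omega>. ennreal (f (X K \<omega>) + h (X K \<omega>) - \<phi>star) \<partial>M) \<le> ennreal (4 * S / (real K)\<^sup>2)"
    by (simp add: nn_integral_gap_Suc ennreal_leI)
qed

end

theorem mainTheorem11:
  fixes f :: "'a::euclidean_space \<Rightarrow> real" and gradf :: "'a \<Rightarrow> 'a" and L :: real
    and h :: "'a \<Rightarrow> real" and D :: "'a set"
    and F :: "'a \<Rightarrow> 'b \<Rightarrow> real" and P :: "'b measure"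
    and M :: "'w measure" and g :: "nat \<Rightarrow> 'w \<Rightarrow> 'a"
    and x0 xstar :: 'a and \<alpha> \<eta> \<iota>0 :: real and \<delta> :: "nat \<Rightarrow> real"
  assumes L_pos: "L > 0"
    and f_convex: "convex_on UNIV f"
    and f_grad: "\<And>x. (f has_derivative (\<lambda>v. gradf x \<bullet> v)) (at x)"
    and grad_cont: "continuous_on UNIV gradf"
    and grad_lip: "\<And>x y. norm (gradf x - gradf y) \<le> L * norm (x - y)"
    and h_ccp: "closed_convex_proper h D"
    and EX_P: "prob_space P"
    and EX_int: "\<And>x. integrable P (F x)"
    and EX_f: "\<And>x. f x = (\<integral>\<xi>. F x \<xi> \<partial>P)"
    and xstar_dom: "xstar \<in> D"
    and xstar_min: "\<And>x. x \<in> D \<Longrightarrow> f xstar + h xstar \<le> f x + h x"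
    and M_prob: "prob_space M"
    and g_meas: "\<And>k. g k \<in> borel_measurable M"
    and g_int: "\<And>k. integrable M (g k)"
    and eta: "0 \<le> \<eta>" "\<eta> < 1"
    and iota: "0 \<le> \<iota>0" "\<iota>0\<^sup>2 < 1 - \<eta>"
    and delta_nonneg: "\<And>k. \<delta> k \<ge> 0"
    and alpha_pos: "\<alpha> > 0"
    and alpha_le: "\<alpha> \<le> (1 - \<eta> - \<iota>0\<^sup>2) / L"
  shows
    "(unbiased M gradf h D (\<lambda>_. \<alpha>) (\<lambda>_. 0) x0 g
      \<and> condC M gradf h D (\<lambda>_. \<alpha>) (\<lambda>_. 0) x0 g (\<lambda>_. \<eta>) \<iota>0 \<delta>
      \<and> summable (\<lambda>k. (\<delta> k)\<^sup>2)
      \<longrightarrow> (\<exists>C::real. \<forall>K::nat. K \<ge> 1 \<longrightarrow>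
            Min ((\<lambda>k. \<integral>\<^sup>+ \<omega>. ennreal (f (xit h D (\<lambda>_. \<alpha>) (\<lambda>_. 0) x0 g k \<omega>)
                      + h (xit h D (\<lambda>_. \<alpha>) (\<lambda>_. 0) x0 g k \<omega>) - (f xstar + h xstar)) \<partial>M) ` {..<K})
            \<le> ennreal (C / real K)))
   \<and> (unbiased M gradf h D (\<lambda>_. \<alpha>) beta_acc x0 g
      \<and> condC M gradf h D (\<lambda>_. \<alpha>) beta_acc x0 g (\<lambda>_. \<eta>) \<iota>0 \<delta>
      \<and> summable (\<lambda>k. (\<delta> k)\<^sup>2 / (theta_acc (Suc k))\<^sup>2)
      \<longrightarrow> (\<exists>C::real. \<forall>K::nat. K \<ge> 1 \<longrightarrow>
            (\<integral>\<^sup>+ \<omega>. ennreal (f (xit h D (\<lambda>_. \<alpha>) beta_acc x0 g K \<omega>)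
                      + h (xit h D (\<lambda>_. \<alpha>) beta_acc x0 g K \<omega>) - (f xstar + h xstar)) \<partial>M)
            \<le> ennreal (C / (real K)\<^sup>2)))"
proof -
  have "0 \<le> L" using L_pos by simp
  have "\<alpha> * L \<le> 1 - \<eta> - \<iota>0\<^sup>2" using alpha_le L_pos by (simp add: le_divide_eq mult.commute)
  then have "\<alpha> * L \<le> 1 - \<eta>" using zero_le_power2[of \<iota>0] by linarith
  have "\<exists>c0 c1. 0 \<le> c1 \<and> (\<forall>z\<in>D. c0 - c1 * norm z \<le> h z)"
    using h_ccp unfolding closed_convex_proper_def
    by (intro composite_minimizer_imp_minorant[OF f_grad grad_lip \<open>0 \<le> L\<close> _ _ xstar_dom xstar_min]) auto
  then have "prox_gradient h D f gradf L"
    by (intro prox_gradient.intro prox_operator.intro prox_gradient_axioms.intro h_ccp f_convex f_grad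
        grad_lip \<open>0 \<le> L\<close>)
  then have algorithm: "stochastic_prox_gradient h D f gradf L M g x0 xstar \<alpha> \<eta> \<iota>0 \<delta> \<beta>"
    if "unbiased M gradf h D (\<lambda>_. \<alpha>) \<beta> x0 g" and "condC M gradf h D (\<lambda>_. \<alpha>) \<beta> x0 g (\<lambda>_. \<eta>) \<iota>0 \<delta>"
    for \<beta>
    by (intro stochastic_prox_gradient.intro stochastic_prox_gradient_axioms.intro M_prob g_meas g_int
        eta alpha_pos \<open>\<alpha> * L \<le> 1 - \<eta>\<close> that xstar_dom xstar_min)
  show ?thesis
    by (intro conjI impI; elim conjE; rule stochastic_prox_gradient.option_I_rate[OF algorithm]
        stochastic_prox_gradient.option_II_rate[OF algorithm]; simp)
qed

end
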